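(* Fix an integer $\Lambda\ge3$ and let $(G,s,t)$ be a 2-terminal graph in the class $\mathcal W$ such that $G$ has maxmaxflow at most $\Lambda$. Let $\rho^\star_\Lambda$ be the unique solution in $(0,1)$ of $(1+\rho)^\Lambda=2(1+\rho^2)^{\Lambda-1}$. For $q\in\mathbb C$ with $q\neq1$ put $\rho=1/|q-1|$ and $X=\big(2/(1+\rho)\big)^{1/(\Lambda-1)}$. Then $P_G(q)\neq0$ whenever $$|q-1|\ge1/\rho^\star_\Lambda\quad\text{and}\quad|q-2|\ge\frac{2(1-\rho X^2)}{X^2-1}.$$
   Context: Chromatic polynomial of $G=(V,E)$: $P_G(q)=\sum_{A\subseteq E}(-1)^{|A|}q^{k(A)}$, $k(A)$ = number of connected components of $(V,A)$. $\lambda_G(x,y)$ = maximum number of edge-disjoint $x$–$y$ paths; maxmaxflow $\Lambda(G)=\max_{x\ne y}\lambda_G(x,y)$. A 2-terminal graph $(G,s,t)$ has distinct terminals $s,t$. Parallel composition of $(G_1,s_1,t_1),(G_2,s_2,t_2)$ (disjoint vertex sets): identify $s_2$ with $s_1$ and $t_2$ with $t_1$, terminals $s_1,t_1$. Series composition: identify $t_1$ with $s_2$, terminals $s_1,t_2$. The Wheatstone bridge is $(W,s,t)$ with $W=K_4$ minus an edge and $s,t$ its two vertices of degree 2. $\mathcal W$ is the smallest class of 2-terminal graphs containing $K_2$ (terminals its two vertices) and the Wheatstone bridge and closed under series and parallel composition. *)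

theory Defs
  imports Complex_Main
begin

text \<open>Multigraphs: a vertex set V :: 'a set and an edge set E of labelled edges
  (label, {u,v}); the label allows parallel edges. Edges are undirected.\<close>

type_synonym ('a,'b) edge = "'b \<times> 'a set"

definition adj_rel :: "('a,'b) edge set \<Rightarrow> ('a \<times> 'a) set" where
  "adj_rel A = {(u,v). \<exists>l. (l, {u,v}) \<in> A}"

definition conn_rel :: "'a set \<Rightarrow> ('a,'b) edge set \<Rightarrow> ('a \<times> 'a) set" where
  "conn_rel V A = (adj_rel A)\<^sup>* \<inter> (V \<times> V)"

definition num_comps :: "'a set \<Rightarrow> ('a,'b) edge set \<Rightarrow> nat" where
  "num_comps V A = card (V // conn_rel V A)"

definition chrom_poly :: "'a set \<Rightarrow> ('a,'b) edge set \<Rightarrow> complex \<Rightarrow> complex" where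
  "chrom_poly V E q = (\<Sum>A\<in>Pow E. (-1) ^ card A * q ^ num_comps V A)"

definition is_path :: "'a set \<Rightarrow> ('a,'b) edge set \<Rightarrow> 'a \<Rightarrow> 'a \<Rightarrow> 'a list \<Rightarrow> ('a,'b) edge list \<Rightarrow> bool" where
  "is_path V E x y vs es \<longleftrightarrow>
     vs \<noteq> [] \<and> hd vs = x \<and> last vs = y \<and> distinct vs \<and> set vs \<subseteq> V \<and>
     length vs = Suc (length es) \<and>
     (\<forall>i < length es. es ! i \<in> E \<and> snd (es ! i) = {vs ! i, vs ! Suc i})"

definition local_edge_conn :: "'a set \<Rightarrow> ('a,'b) edge set \<Rightarrow> 'a \<Rightarrow> 'a \<Rightarrow> nat" where
  "local_edge_conn V E x y = Max {n. \<exists>P :: ('a list \<times> ('a,'b) edge list) list.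
      length P = n \<and> (\<forall>i < n. is_path V E x y (fst (P ! i)) (snd (P ! i))) \<and>
      (\<forall>i < n. \<forall>j < n. i \<noteq> j \<longrightarrow> set (snd (P ! i)) \<inter> set (snd (P ! j)) = {})}"

definition maxmaxflow :: "'a set \<Rightarrow> ('a,'b) edge set \<Rightarrow> nat" where
  "maxmaxflow V E = Max {local_edge_conn V E x y | x y. x \<in> V \<and> y \<in> V \<and> x \<noteq> y}"

inductive inW :: "'a set \<Rightarrow> ('a,'b) edge set \<Rightarrow> 'a \<Rightarrow> 'a \<Rightarrow> bool" where
  K2: "s \<noteq> t \<Longrightarrow> inW {s, t} {(l, {s, t})} s t"
| Wheatstone: "distinct [s, a, b, t] \<Longrightarrow>
     inW {s, a, b, t} {(l1, {s, a}), (l2, {s, b}), (l3, {a, b}), (l4, {a, t}), (l5, {b, t})} s t"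
| parallel: "inW V1 E1 s t \<Longrightarrow> inW V2 E2 s t \<Longrightarrow> V1 \<inter> V2 = {s, t} \<Longrightarrow> E1 \<inter> E2 = {} \<Longrightarrow>
     inW (V1 \<union> V2) (E1 \<union> E2) s t"
| series: "inW V1 E1 s m \<Longrightarrow> inW V2 E2 m t \<Longrightarrow> V1 \<inter> V2 = {m} \<Longrightarrow> E1 \<inter> E2 = {} \<Longrightarrow>
     inW (V1 \<union> V2) (E1 \<union> E2) s t"

definition rho_star :: "nat \<Rightarrow> real" where
  "rho_star L = (THE r. 0 < r \<and> r < 1 \<and> (1 + r) ^ L = 2 * (1 + r\<^sup>2) ^ (L - 1))"

end

theory Submission
  imports Defs "HOL-Library.FuncSet"
begin


definition wf_edges :: "'a set \<Rightarrow> ('a,'b) edge set \<Rightarrow> bool" where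
  "wf_edges V A \<longleftrightarrow> (\<forall>e\<in>A. snd e \<subseteq> V)"

lemma wf_edges_subset: "wf_edges V A \<Longrightarrow> B \<subseteq> A \<Longrightarrow> wf_edges V B"
  unfolding wf_edges_def by blast

lemma wf_edges_Un: "wf_edges V1 A1 \<Longrightarrow> wf_edges V2 A2 \<Longrightarrow> wf_edges (V1 \<union> V2) (A1 \<union> A2)"
  unfolding wf_edges_def by blast

lemma adj_rel_Un: "adj_rel (A \<union> B) = adj_rel A \<union> adj_rel B"
  unfolding adj_rel_def by blast

lemma adj_rel_mono: "A \<subseteq> B \<Longrightarrow> adj_rel A \<subseteq> adj_rel B"
  unfolding adj_rel_def by blast

lemma adj_rel_empty [simp]: "adj_rel {} = {}"
  unfolding adj_rel_def by simp

lemma adj_rel_insert: "adj_rel (insert (l,{u,v}) A) = insert (u,v) (insert (v,u) (adj_rel A))"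
  unfolding adj_rel_def by (auto simp: doubleton_eq_iff)

lemma sym_adj_rel: "sym (adj_rel A)"
  unfolding adj_rel_def sym_def by (auto simp: insert_commute)

lemma adj_rel_subset: "wf_edges V A \<Longrightarrow> adj_rel A \<subseteq> V \<times> V"
  unfolding wf_edges_def adj_rel_def by fastforce

lemma equiv_conn_rel: "equiv V (conn_rel V A)"
proof (rule equivI)
  show "refl_on V (conn_rel V A)" unfolding refl_on_def conn_rel_def by simp
  show "sym (conn_rel V A)"
    unfolding conn_rel_def by (intro sym_Int sym_rtrancl sym_adj_rel) (auto simp: sym_def)
  show "trans (conn_rel V A)"
    unfolding conn_rel_def by (intro trans_Int trans_rtrancl) (auto simp: trans_def)
qed (simp add: conn_rel_def)

lemma conn_rel_mono:
  "(x,y) \<in> conn_rel V1 A1 \<Longrightarrow> V1 \<subseteq> V \<Longrightarrow> A1 \<subseteq> A \<Longrightarrow> (x,y) \<in> conn_rel V A"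
  unfolding conn_rel_def using rtrancl_mono[OF adj_rel_mono] by blast

text \<open>Boolean labellings that are constant along edges are exactly the unions of components;
  there are 2^k(A) of them, and they detect connectivity.\<close>

definition labellings :: "'a set \<Rightarrow> ('a,'b) edge set \<Rightarrow> ('a \<Rightarrow> bool) set" where
  "labellings V A = {f \<in> V \<rightarrow>\<^sub>E UNIV. \<forall>(x,y)\<in>adj_rel A. f x = f y}"

lemma restrict_in_labellings:
  assumes "wf_edges V A" and "\<And>x y. (x,y) \<in> adj_rel A \<Longrightarrow> g x = g y"
  shows "restrict g V \<in> labellings V A"
  using assms adj_rel_subset[OF assms(1)] unfolding labellings_def by auto

lemma labelling_rtrancl_eq:
  assumes "f \<in> labellings V A" and "(x,y) \<in> (adj_rel A)\<^sup>*"
  shows "f x = f y"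
  using assms(2) by induction (use assms(1) in \<open>auto simp: labellings_def\<close>)

lemma labelling_restrict: "f \<in> labellings V A \<Longrightarrow> restrict f V = f"
  unfolding labellings_def by (auto intro: PiE_restrict)

lemma conn_rel_iff_labellings:
  assumes "wf_edges V A"
  shows "(x,y) \<in> conn_rel V A \<longleftrightarrow> x \<in> V \<and> y \<in> V \<and> (\<forall>f\<in>labellings V A. f x = f y)"
proof
  assume "(x,y) \<in> conn_rel V A"
  then show "x \<in> V \<and> y \<in> V \<and> (\<forall>f\<in>labellings V A. f x = f y)"
    unfolding conn_rel_def using labelling_rtrancl_eq by fastforce
next
  assume h: "x \<in> V \<and> y \<in> V \<and> (\<forall>f\<in>labellings V A. f x = f y)"
  have "restrict (\<lambda>z. (x,z) \<in> (adj_rel A)\<^sup>*) V \<in> labellings V A"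
  proof (rule restrict_in_labellings[OF assms])
    fix u v assume "(u,v) \<in> adj_rel A"
    moreover have "(v,u) \<in> adj_rel A" using calculation by (rule symD[OF sym_adj_rel])
    ultimately show "((x,u) \<in> (adj_rel A)\<^sup>*) = ((x,v) \<in> (adj_rel A)\<^sup>*)"
      using rtrancl.rtrancl_into_rtrancl by metis
  qed
  with h show "(x,y) \<in> conn_rel V A" unfolding conn_rel_def by fastforce
qed

lemma labellings_eq_class_constant:
  assumes "wf_edges V A"
  shows "labellings V A = {f \<in> V \<rightarrow>\<^sub>E UNIV. \<forall>(x,y)\<in>conn_rel V A. f x = f y}"
proof (intro equalityI subsetI CollectI conjI)
  fix f assume f: "f \<in> labellings V A"
  then show "f \<in> V \<rightarrow>\<^sub>E UNIV" unfolding labellings_def by blast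
  show "\<forall>(x,y)\<in>conn_rel V A. f x = f y" using f conn_rel_iff_labellings[OF assms] by blast
next
  fix f :: "'a \<Rightarrow> bool" assume "f \<in> {f \<in> V \<rightarrow>\<^sub>E UNIV. \<forall>(x,y)\<in>conn_rel V A. f x = f y}"
  moreover have "adj_rel A \<subseteq> conn_rel V A"
    using adj_rel_subset[OF assms] unfolding conn_rel_def by auto
  ultimately show "f \<in> labellings V A" unfolding labellings_def by blast
qed

lemma labelling_conn_rel_eq:
  assumes "wf_edges V A" "(x,y) \<in> conn_rel V A" "f \<in> labellings V A"
  shows "f x = f y"
  using conn_rel_iff_labellings[OF assms(1), of x y] assms(2,3) by blast

lemma separating_labelling:
  assumes "wf_edges V A" "x \<in> V" "y \<in> V" "(x,y) \<notin> conn_rel V A"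
  obtains f where "f \<in> labellings V A" "f x \<noteq> f y"
  using conn_rel_iff_labellings[OF assms(1), of x y] assms(2-4) by blast

lemma card_class_constant_functions:
  assumes "finite V" and eq: "equiv V R"
  shows "card {f \<in> V \<rightarrow>\<^sub>E (UNIV :: bool set). \<forall>(x,y)\<in>R. f x = f y} = 2 ^ card (V // R)"
proof -
  let ?F = "{f \<in> V \<rightarrow>\<^sub>E (UNIV :: bool set). \<forall>(x,y)\<in>R. f x = f y}"
  define lift where "lift g = restrict (\<lambda>x. g (R``{x}) :: bool) V" for g
  define descend where "descend f = restrict (\<lambda>C. f (SOME z. z \<in> C)) (V // R)"
    for f :: "'a \<Rightarrow> bool"
  have rep: "(x, SOME z. z \<in> R``{x}) \<in> R" if "x \<in> V" for x
    using that eq someI[of "\<lambda>z. z \<in> R``{x}" x] by (auto simp: equiv_def refl_on_def)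
  have "bij_betw lift (V // R \<rightarrow>\<^sub>E UNIV) ?F"
  proof (rule bij_betw_byWitness[where f' = descend])
    show "\<forall>g\<in>V // R \<rightarrow>\<^sub>E UNIV. descend (lift g) = g"
    proof
      fix g :: "'a set \<Rightarrow> bool" assume g: "g \<in> V // R \<rightarrow>\<^sub>E UNIV"
      have "descend (lift g) C = g C" if C: "C \<in> V // R" for C
      proof -
        obtain x where x: "x \<in> V" "C = R``{x}" using C by (rule quotientE)
        define z where "z = (SOME z. z \<in> C)"
        have xz: "(x,z) \<in> R" using rep[OF x(1)] by (simp add: z_def x(2))
        then have "z \<in> V" using equiv_type[OF eq] by blast
        moreover have "R``{z} = C" using equiv_class_eq[OF eq xz] x(2) by simp
        ultimately show ?thesis using C unfolding descend_def lift_def by (simp add: z_def[symmetric])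
      qed
      then have "descend (lift g) = restrict g (V // R)"
        unfolding descend_def by (intro restrict_ext) (simp add: descend_def)
      then show "descend (lift g) = g" using PiE_restrict[OF g] by simp
    qed
    show "\<forall>f\<in>?F. lift (descend f) = f"
    proof
      fix f assume f: "f \<in> ?F"
      have "f (SOME z. z \<in> R``{x}) = f x" if "x \<in> V" for x
        using rep[OF that] f by fastforce
      then have "lift (descend f) = restrict f V"
        unfolding lift_def descend_def using quotientI[of _ V R] by (intro restrict_ext) auto
      moreover have "restrict f V = f" using f by (blast intro: PiE_restrict)
      ultimately show "lift (descend f) = f" by simp
    qed
    show "lift ` (V // R \<rightarrow>\<^sub>E UNIV) \<subseteq> ?F"
    proof (rule image_subsetI)
      fix g :: "'a set \<Rightarrow> bool"
      have "lift g x = lift g y" if xy: "(x,y) \<in> R" for x y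
      proof -
        have "x \<in> V" "y \<in> V" using xy equiv_type[OF eq] by auto
        then show ?thesis using equiv_class_eq[OF eq xy] unfolding lift_def by simp
      qed
      moreover have "lift g \<in> V \<rightarrow>\<^sub>E UNIV" unfolding lift_def by simp
      ultimately show "lift g \<in> ?F" by blast
    qed
    show "descend ` ?F \<subseteq> V // R \<rightarrow>\<^sub>E UNIV"
      unfolding descend_def by auto
  qed
  then have "card ?F = card (V // R \<rightarrow>\<^sub>E (UNIV :: bool set))"
    by (simp add: bij_betw_same_card)
  also have "\<dots> = 2 ^ card (V // R)"
    using finite_quotient[OF assms(1) equiv_type[OF eq]] by (simp add: card_PiE)
  finally show ?thesis .
qed

lemma card_labellings:
  assumes "finite V" and "wf_edges V A"
  shows "card (labellings V A) = 2 ^ num_comps V A"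
  unfolding labellings_eq_class_constant[OF assms(2)] num_comps_def
  using assms(1) equiv_conn_rel by (rule card_class_constant_functions)

lemma finite_labellings: "finite V \<Longrightarrow> finite (labellings V A)"
  unfolding labellings_def by (simp add: finite_PiE)

lemma card_eq_by_involution:
  assumes "\<phi> ` S \<subseteq> T" and "\<phi> ` T \<subseteq> S" and "\<And>x. x \<in> S \<union> T \<Longrightarrow> \<phi> (\<phi> x) = x"
  shows "card S = card T"
  by (rule bij_betw_same_card, rule bij_betw_byWitness[where f' = \<phi>]) (use assms in auto)

lemma labellings_xor:
  assumes "wf_edges V A" and "f \<in> labellings V A" and "g \<in> labellings V A"
  shows "restrict (\<lambda>x. f x \<noteq> g x) V \<in> labellings V A"
  using assms(2,3) by (intro restrict_in_labellings[OF assms(1)]) (auto simp: labellings_def)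

definition count_labellings :: "'a set \<Rightarrow> ('a,'b) edge set \<Rightarrow> 'a \<Rightarrow> 'a \<Rightarrow> bool \<Rightarrow> bool \<Rightarrow> nat" where
  "count_labellings V A u v p r = card {f \<in> labellings V A. f u = p \<and> f v = r}"

lemma count_labellings_xor:
  assumes wf: "wf_edges V A" and g: "g \<in> labellings V A" and "u \<in> V" "v \<in> V"
  shows "count_labellings V A u v p r = count_labellings V A u v (p \<noteq> g u) (r \<noteq> g v)"
proof -
  let ?xor = "\<lambda>f. restrict (\<lambda>x. f x \<noteq> g x) V"
  have maps: "?xor ` {f \<in> labellings V A. f u = p' \<and> f v = r'} \<subseteq>
      {f \<in> labellings V A. f u = (p' \<noteq> g u) \<and> f v = (r' \<noteq> g v)}" for p' r'
  proof (rule image_subsetI)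
    fix f assume "f \<in> {f \<in> labellings V A. f u = p' \<and> f v = r'}"
    then show "?xor f \<in> {f \<in> labellings V A. f u = (p' \<noteq> g u) \<and> f v = (r' \<noteq> g v)}"
      using labellings_xor[OF wf _ g] assms(3,4) by simp
  qed
  have inv: "?xor (?xor f) = f" if "f \<in> labellings V A" for f
  proof -
    have "?xor (?xor f) = restrict f V" by (rule restrict_ext) auto
    then show ?thesis using labelling_restrict[OF that] by simp
  qed
  have xor_twice: "((p \<noteq> g u) \<noteq> g u) = p" "((r \<noteq> g v) \<noteq> g v) = r" by auto
  show ?thesis unfolding count_labellings_def
  proof (rule card_eq_by_involution[where \<phi> = ?xor])
    show "?xor ` {f \<in> labellings V A. f u = p \<and> f v = r} \<subseteq>
        {f \<in> labellings V A. f u = (p \<noteq> g u) \<and> f v = (r \<noteq> g v)}" by (rule maps)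
    show "?xor ` {f \<in> labellings V A. f u = (p \<noteq> g u) \<and> f v = (r \<noteq> g v)} \<subseteq>
        {f \<in> labellings V A. f u = p \<and> f v = r}"
      using maps[of "p \<noteq> g u" "r \<noteq> g v"] unfolding xor_twice .
  qed (use inv in blast)
qed

lemma count_labellings_negate:
  assumes "wf_edges V A" and "u \<in> V" "v \<in> V"
  shows "count_labellings V A u v p r = count_labellings V A u v (\<not> p) (\<not> r)"
proof -
  have "restrict (\<lambda>_. True) V \<in> labellings V A" by (rule restrict_in_labellings[OF assms(1)]) simp
  from count_labellings_xor[OF assms(1) this assms(2,3), of p r] assms(2,3) show ?thesis by simp
qed

lemma count_labellings_negate_component:
  assumes wf: "wf_edges V A" and "u \<in> V" "v \<in> V" and "(u,v) \<notin> conn_rel V A"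
  shows "count_labellings V A u v p r = count_labellings V A u v p (\<not> r)"
proof -
  let ?g = "restrict (\<lambda>x. (v,x) \<in> (adj_rel A)\<^sup>*) V"
  have "?g \<in> labellings V A"
  proof (rule restrict_in_labellings[OF wf])
    fix x y assume "(x,y) \<in> adj_rel A"
    moreover have "(y,x) \<in> adj_rel A" using calculation by (rule symD[OF sym_adj_rel])
    ultimately show "((v,x) \<in> (adj_rel A)\<^sup>*) = ((v,y) \<in> (adj_rel A)\<^sup>*)"
      using rtrancl.rtrancl_into_rtrancl by metis
  qed
  moreover have "(v,u) \<notin> (adj_rel A)\<^sup>*"
    using assms(2-4) symD[OF sym_rtrancl[OF sym_adj_rel], of v u] unfolding conn_rel_def by auto
  ultimately show ?thesis using count_labellings_xor[OF wf _ assms(2,3), of _ p r] assms(2,3) by simp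
qed

lemma count_labellings_conn_zero:
  assumes "wf_edges V A" and "(u,v) \<in> conn_rel V A"
  shows "count_labellings V A u v p (\<not> p) = 0"
proof -
  have "\<forall>f\<in>labellings V A. f u = f v" using assms(2) unfolding conn_rel_iff_labellings[OF assms(1)] by blast
  then have "{f \<in> labellings V A. f u = p \<and> f v = (\<not> p)} = {}" by auto
  then show ?thesis unfolding count_labellings_def by (simp only: card.empty)
qed

lemma card_labellings_agree:
  assumes "finite V"
  shows "card {f \<in> labellings V A. f u = f v} =
    count_labellings V A u v True True + count_labellings V A u v False False"
proof -
  have "finite (labellings V A)" using assms by (rule finite_labellings)
  then have "card ({f \<in> labellings V A. f u = True \<and> f v = True} \<union> {f \<in> labellings V A. f u = False \<and> f v = False})
    = count_labellings V A u v True True + count_labellings V A u v False False"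
    unfolding count_labellings_def by (intro card_Un_disjoint) auto
  moreover have "{f \<in> labellings V A. f u = f v} =
      {f \<in> labellings V A. f u = True \<and> f v = True} \<union> {f \<in> labellings V A. f u = False \<and> f v = False}"
    by auto
  ultimately show ?thesis by simp
qed

lemma card_labellings_split:
  assumes "finite V"
  shows "card (labellings V A) = card {f \<in> labellings V A. f u = f v} +
    count_labellings V A u v True False + count_labellings V A u v False True"
proof -
  have fin: "finite (labellings V A)" using assms by (rule finite_labellings)
  let ?S = "\<lambda>p r. {f \<in> labellings V A. f u = p \<and> f v = r}"
  have "labellings V A = {f \<in> labellings V A. f u = f v} \<union> (?S True False \<union> ?S False True)"
    by auto
  moreover have "card (?S True False \<union> ?S False True) = card (?S True False) + card (?S False True)"
    using fin by (intro card_Un_disjoint) auto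
  moreover have "card ({f \<in> labellings V A. f u = f v} \<union> (?S True False \<union> ?S False True)) =
      card {f \<in> labellings V A. f u = f v} + card (?S True False \<union> ?S False True)"
    using fin by (intro card_Un_disjoint) auto
  ultimately show ?thesis unfolding count_labellings_def by simp
qed

lemma labellings_insert_edge:
  "labellings V (insert (l,{u,v}) A) = {f \<in> labellings V A. f u = f v}"
  unfolding labellings_def adj_rel_insert by auto

lemma num_comps_insert_edge:
  assumes fin: "finite V" and wf: "wf_edges V A" and uv: "u \<in> V" "v \<in> V"
  shows "num_comps V (insert (l,{u,v}) A) =
    (if (u,v) \<in> conn_rel V A then num_comps V A else num_comps V A - 1)"
proof -
  have wf': "wf_edges V (insert (l,{u,v}) A)" using wf uv unfolding wf_edges_def by simp
  let ?k = "num_comps V A" and ?k' = "num_comps V (insert (l,{u,v}) A)"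
  have split: "2 ^ ?k = 2 ^ ?k' + count_labellings V A u v True False + count_labellings V A u v False True"
    using card_labellings_split[OF fin, of A u v] card_labellings[OF fin wf] card_labellings[OF fin wf']
    unfolding labellings_insert_edge by simp
  show ?thesis
  proof (cases "(u,v) \<in> conn_rel V A")
    case True
    then show ?thesis
      using split count_labellings_conn_zero[OF wf True, of True] count_labellings_conn_zero[OF wf True, of False]
      by simp
  next
    case False
    have "count_labellings V A u v True False + count_labellings V A u v False True = 2 ^ ?k'"
      using card_labellings_agree[OF fin, of A u v] card_labellings[OF fin wf']
        count_labellings_negate_component[OF wf uv False, of True True]
        count_labellings_negate_component[OF wf uv False, of False False]
      unfolding labellings_insert_edge by simp
    then have "2 ^ ?k = (2::nat) ^ Suc ?k'" using split by simp
    then have "?k = Suc ?k'" using power_inject_exp[of "2::nat" ?k "Suc ?k'"] by simp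
    then show ?thesis using False by simp
  qed
qed

lemma conn_rel_insert_edge:
  assumes "u \<in> V" "v \<in> V"
  shows "(x,y) \<in> conn_rel V (insert (l,{u,v}) A) \<longleftrightarrow> (x,y) \<in> conn_rel V A \<or>
    (x,u) \<in> conn_rel V A \<and> (v,y) \<in> conn_rel V A \<or> (x,v) \<in> conn_rel V A \<and> (u,y) \<in> conn_rel V A"
proof -
  let ?r = "adj_rel A"
  have "(x,y) \<in> (insert (u,v) (insert (v,u) ?r))\<^sup>* \<longleftrightarrow>
     (x,y) \<in> ?r\<^sup>* \<or> (x,u) \<in> ?r\<^sup>* \<and> (v,y) \<in> ?r\<^sup>* \<or> (x,v) \<in> ?r\<^sup>* \<and> (u,y) \<in> ?r\<^sup>*"
    unfolding rtrancl_insert[of u v] rtrancl_insert[of v u] by (auto intro: rtrancl_trans)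
  then show ?thesis unfolding conn_rel_def adj_rel_insert using assms by blast
qed

lemma conn_rel_empty: "(x,y) \<in> conn_rel V {} \<longleftrightarrow> x \<in> V \<and> x = y"
  unfolding conn_rel_def by auto

lemma num_comps_empty: "num_comps V {} = card V"
proof -
  have "V // conn_rel V {} = (\<lambda>x. {x}) ` V"
    unfolding quotient_def conn_rel_def by auto
  moreover have "inj_on (\<lambda>x. {x}) V" by (simp add: inj_on_def)
  ultimately show ?thesis unfolding num_comps_def by (metis card_image)
qed

lemma restrict_labelling:
  assumes "wf_edges V1 A1" and "f \<in> labellings V A" and "A1 \<subseteq> A"
  shows "restrict f V1 \<in> labellings V1 A1"
proof (rule restrict_in_labellings[OF assms(1)])
  fix x y assume "(x,y) \<in> adj_rel A1"
  then show "f x = f y" using assms(2) adj_rel_mono[OF assms(3)] unfolding labellings_def by blast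
qed

definition glue :: "'a set \<Rightarrow> 'a set \<Rightarrow> ('a \<Rightarrow> bool) \<Rightarrow> ('a \<Rightarrow> bool) \<Rightarrow> 'a \<Rightarrow> bool" where
  "glue V1 V2 f1 f2 = restrict (\<lambda>x. if x \<in> V1 then f1 x else f2 x) (V1 \<union> V2)"

lemma glue_in_labellings:
  assumes wf1: "wf_edges V1 A1" and wf2: "wf_edges V2 A2"
    and f1: "f1 \<in> labellings V1 A1" and f2: "f2 \<in> labellings V2 A2"
    and agree: "\<And>x. x \<in> V1 \<inter> V2 \<Longrightarrow> f1 x = f2 x"
  shows "glue V1 V2 f1 f2 \<in> labellings (V1 \<union> V2) (A1 \<union> A2)"
  unfolding glue_def
proof (rule restrict_in_labellings[OF wf_edges_Un[OF wf1 wf2]])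
  fix x y assume "(x,y) \<in> adj_rel (A1 \<union> A2)"
  then consider "(x,y) \<in> adj_rel A1" | "(x,y) \<in> adj_rel A2" unfolding adj_rel_Un by blast
  then show "(if x \<in> V1 then f1 x else f2 x) = (if y \<in> V1 then f1 y else f2 y)"
  proof cases
    case 1
    then show ?thesis using adj_rel_subset[OF wf1] f1 unfolding labellings_def by auto
  next
    case 2
    then have "x \<in> V2" "y \<in> V2" using adj_rel_subset[OF wf2] by auto
    moreover have "f2 x = f2 y" using 2 f2 unfolding labellings_def by auto
    ultimately show ?thesis using agree by (metis IntI)
  qed
qed

lemma card_labellings_Un:
  assumes wf1: "wf_edges V1 A1" and wf2: "wf_edges V2 A2"
  shows "card (labellings (V1 \<union> V2) (A1 \<union> A2)) =
    card {(f1,f2). f1 \<in> labellings V1 A1 \<and> f2 \<in> labellings V2 A2 \<and> (\<forall>x\<in>V1 \<inter> V2. f1 x = f2 x)}"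
proof (rule bij_betw_same_card, rule bij_betw_byWitness[where f' = "\<lambda>(f1,f2). glue V1 V2 f1 f2"])
  show "\<forall>f\<in>labellings (V1 \<union> V2) (A1 \<union> A2). (\<lambda>(f1,f2). glue V1 V2 f1 f2) (restrict f V1, restrict f V2) = f"
  proof
    fix f assume f: "f \<in> labellings (V1 \<union> V2) (A1 \<union> A2)"
    have "glue V1 V2 (restrict f V1) (restrict f V2) = restrict f (V1 \<union> V2)"
      unfolding glue_def by (rule restrict_ext) auto
    then show "(\<lambda>(f1,f2). glue V1 V2 f1 f2) (restrict f V1, restrict f V2) = f"
      using labelling_restrict[OF f] by simp
  qed
  show "\<forall>p\<in>{(f1,f2). f1 \<in> labellings V1 A1 \<and> f2 \<in> labellings V2 A2 \<and> (\<forall>x\<in>V1 \<inter> V2. f1 x = f2 x)}.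
      (\<lambda>f. (restrict f V1, restrict f V2)) ((\<lambda>(f1,f2). glue V1 V2 f1 f2) p) = p"
  proof clarify
    fix f1 f2 assume f1: "f1 \<in> labellings V1 A1" and f2: "f2 \<in> labellings V2 A2"
      and agree: "\<forall>x\<in>V1 \<inter> V2. f1 x = f2 x"
    have "restrict (glue V1 V2 f1 f2) V1 = restrict f1 V1"
      unfolding glue_def by (rule restrict_ext) simp
    moreover have "restrict (glue V1 V2 f1 f2) V2 = restrict f2 V2"
      unfolding glue_def using agree by (intro restrict_ext) auto
    ultimately show "restrict (glue V1 V2 f1 f2) V1 = f1 \<and> restrict (glue V1 V2 f1 f2) V2 = f2"
      using labelling_restrict[OF f1] labelling_restrict[OF f2] by simp
  qed
  show "(\<lambda>f. (restrict f V1, restrict f V2)) ` labellings (V1 \<union> V2) (A1 \<union> A2) \<subseteq>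
      {(f1,f2). f1 \<in> labellings V1 A1 \<and> f2 \<in> labellings V2 A2 \<and> (\<forall>x\<in>V1 \<inter> V2. f1 x = f2 x)}"
    using restrict_labelling[OF wf1] restrict_labelling[OF wf2] by auto
  show "(\<lambda>(f1,f2). glue V1 V2 f1 f2) `
      {(f1,f2). f1 \<in> labellings V1 A1 \<and> f2 \<in> labellings V2 A2 \<and> (\<forall>x\<in>V1 \<inter> V2. f1 x = f2 x)}
      \<subseteq> labellings (V1 \<union> V2) (A1 \<union> A2)"
    using glue_in_labellings[OF wf1 wf2] by auto
qed


lemma card_pairs_same_key:
  fixes key1 :: "'a \<Rightarrow> 'k::finite" and key2 :: "'b \<Rightarrow> 'k"
  assumes "finite A" and "finite B"
  shows "card {(x,y). x \<in> A \<and> y \<in> B \<and> key1 x = key2 y} =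
    (\<Sum>k\<in>UNIV. card {x \<in> A. key1 x = k} * card {y \<in> B. key2 y = k})"
proof -
  have "{(x,y). x \<in> A \<and> y \<in> B \<and> key1 x = key2 y} = (\<Union>k. {x \<in> A. key1 x = k} \<times> {y \<in> B. key2 y = k})"
    by auto
  also have "card \<dots> = (\<Sum>k\<in>UNIV. card ({x \<in> A. key1 x = k} \<times> {y \<in> B. key2 y = k}))"
    using assms by (intro card_UN_disjoint) auto
  finally show ?thesis by (simp add: card_cartesian_product)
qed

lemma card_labellings_glue:
  assumes fin: "finite V1" "finite V2" and wf: "wf_edges V1 A1" "wf_edges V2 A2"
    and I: "V1 \<inter> V2 = {u,v}"
  shows "card (labellings (V1 \<union> V2) (A1 \<union> A2)) =
    (\<Sum>p\<in>UNIV. \<Sum>r\<in>UNIV. count_labellings V1 A1 u v p r * count_labellings V2 A2 u v p r)"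
proof -
  have fin': "finite (labellings V1 A1)" "finite (labellings V2 A2)"
    using fin by (simp_all add: finite_labellings)
  have "{(f1,f2). f1 \<in> labellings V1 A1 \<and> f2 \<in> labellings V2 A2 \<and> (\<forall>x\<in>V1 \<inter> V2. f1 x = f2 x)} =
      {(f1,f2). f1 \<in> labellings V1 A1 \<and> f2 \<in> labellings V2 A2 \<and> (f1 u, f1 v) = (f2 u, f2 v)}"
    unfolding I by auto
  then have "card (labellings (V1 \<union> V2) (A1 \<union> A2)) =
      (\<Sum>k\<in>UNIV. card {f \<in> labellings V1 A1. (f u, f v) = k} * card {f \<in> labellings V2 A2. (f u, f v) = k})"
    unfolding card_labellings_Un[OF wf] by (simp only: card_pairs_same_key[OF fin'])
  also have "\<dots> = (\<Sum>p\<in>UNIV. \<Sum>r\<in>UNIV. card {f \<in> labellings V1 A1. (f u, f v) = (p,r)} *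
      card {f \<in> labellings V2 A2. (f u, f v) = (p,r)})"
    unfolding UNIV_Times_UNIV[symmetric] sum.cartesian_product by (intro sum.cong) auto
  finally show ?thesis unfolding count_labellings_def by simp
qed

lemma card_labellings_double_count:
  assumes "finite V" "wf_edges V A" "m \<in> V"
  shows "card (labellings V A) = 2 * count_labellings V A m m True True"
proof -
  have "(m,m) \<in> conn_rel V A" using assms(3) by (simp add: conn_rel_def)
  then show ?thesis
    using card_labellings_split[OF assms(1), of A m m] card_labellings_agree[OF assms(1), of A m m]
      count_labellings_conn_zero[OF assms(2), of m m True]
      count_labellings_conn_zero[OF assms(2), of m m False] count_labellings_negate[OF assms(2,3,3), of True True]
    by simp
qed

lemma num_comps_series:
  assumes fin: "finite V1" "finite V2" and wf: "wf_edges V1 A1" "wf_edges V2 A2"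
    and I: "V1 \<inter> V2 = {m}"
  shows "num_comps (V1 \<union> V2) (A1 \<union> A2) + 1 = num_comps V1 A1 + num_comps V2 A2"
proof -
  have m: "m \<in> V1" "m \<in> V2" and I': "V1 \<inter> V2 = {m,m}" using I by auto
  have "(m,m) \<in> conn_rel V1 A1" "(m,m) \<in> conn_rel V2 A2" using m by (simp_all add: conn_rel_def)
  then have "card (labellings (V1 \<union> V2) (A1 \<union> A2)) =
      2 * (count_labellings V1 A1 m m True True * count_labellings V2 A2 m m True True)"
    using card_labellings_glue[OF fin wf I']
      count_labellings_conn_zero[OF wf(1), of m m True] count_labellings_conn_zero[OF wf(1), of m m False]
      count_labellings_conn_zero[OF wf(2), of m m True] count_labellings_conn_zero[OF wf(2), of m m False]
      count_labellings_negate[OF wf(1) m(1) m(1), of True True]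
      count_labellings_negate[OF wf(2) m(2) m(2), of True True]
    by (simp add: UNIV_bool)
  then have "2 * 2 ^ num_comps (V1 \<union> V2) (A1 \<union> A2) = 2 ^ num_comps V1 A1 * (2::nat) ^ num_comps V2 A2"
    using card_labellings_double_count[OF fin(1) wf(1) m(1)] card_labellings_double_count[OF fin(2) wf(2) m(2)]
      card_labellings[OF fin(1) wf(1)] card_labellings[OF fin(2) wf(2)]
      card_labellings[of "V1 \<union> V2" "A1 \<union> A2"] fin wf_edges_Un[OF wf]
    by simp
  then show ?thesis by (simp flip: power_Suc power_add)
qed

lemma num_comps_parallel:
  assumes fin: "finite V1" "finite V2" and wf: "wf_edges V1 A1" "wf_edges V2 A2"
    and I: "V1 \<inter> V2 = {s,t}"
  shows "num_comps (V1 \<union> V2) (A1 \<union> A2) + 2 = num_comps V1 A1 + num_comps V2 A2 +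
    (if (s,t) \<in> conn_rel V1 A1 \<and> (s,t) \<in> conn_rel V2 A2 then 1 else 0)"
proof -
  have st: "s \<in> V1" "t \<in> V1" "s \<in> V2" "t \<in> V2" using I by auto
  define a1 b1 a2 b2 where "a1 = count_labellings V1 A1 s t True True"
    and "b1 = count_labellings V1 A1 s t True False"
    and "a2 = count_labellings V2 A2 s t True True"
    and "b2 = count_labellings V2 A2 s t True False"
  note neg1 = count_labellings_negate[OF wf(1) st(1,2)] and neg2 = count_labellings_negate[OF wf(2) st(3,4)]
  have card1: "card (labellings V1 A1) = 2 * a1 + 2 * b1"
    using card_labellings_split[OF fin(1), of A1 s t] card_labellings_agree[OF fin(1), of A1 s t]
      neg1[of True True] neg1[of True False] unfolding a1_def b1_def by simp
  have card2: "card (labellings V2 A2) = 2 * a2 + 2 * b2"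
    using card_labellings_split[OF fin(2), of A2 s t] card_labellings_agree[OF fin(2), of A2 s t]
      neg2[of True True] neg2[of True False] unfolding a2_def b2_def by simp
  have card12: "card (labellings (V1 \<union> V2) (A1 \<union> A2)) = 2 * a1 * a2 + 2 * b1 * b2"
    using card_labellings_glue[OF fin wf I] neg1[of True True] neg1[of True False]
      neg2[of True True] neg2[of True False]
    unfolding a1_def b1_def a2_def b2_def by (simp add: UNIV_bool)
  have b1: "b1 = (if (s,t) \<in> conn_rel V1 A1 then 0 else a1)"
    using count_labellings_conn_zero[OF wf(1), of s t True]
      count_labellings_negate_component[OF wf(1) st(1,2), of True True]
    unfolding a1_def b1_def by auto
  have b2: "b2 = (if (s,t) \<in> conn_rel V2 A2 then 0 else a2)"
    using count_labellings_conn_zero[OF wf(2), of s t True]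
      count_labellings_negate_component[OF wf(2) st(3,4), of True True]
    unfolding a2_def b2_def by auto
  define c where "c = (if (s,t) \<in> conn_rel V1 A1 \<and> (s,t) \<in> conn_rel V2 A2 then 1 else (0::nat))"
  have "4 * card (labellings (V1 \<union> V2) (A1 \<union> A2)) = card (labellings V1 A1) * card (labellings V2 A2) * 2 ^ c"
    unfolding card1 card2 card12 b1 b2 c_def by (simp add: algebra_simps)
  then have "(2::nat) ^ (num_comps (V1 \<union> V2) (A1 \<union> A2) + 2) = 2 ^ (num_comps V1 A1 + num_comps V2 A2 + c)"
    using card_labellings[OF fin(1) wf(1)] card_labellings[OF fin(2) wf(2)]
      card_labellings[of "V1 \<union> V2" "A1 \<union> A2"] fin wf_edges_Un[OF wf]
    by (simp add: power_add)
  then show ?thesis unfolding c_def by (simp only: power_inject_exp one_less_numeral_iff semiring_norm(76))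
qed

lemma glue_apply [simp]: "x \<in> V1 \<union> V2 \<Longrightarrow> glue V1 V2 f1 f2 x = (if x \<in> V1 then f1 x else f2 x)"
  unfolding glue_def by simp

lemma conn_rel_trans: "(x,y) \<in> conn_rel V A \<Longrightarrow> (y,z) \<in> conn_rel V A \<Longrightarrow> (x,z) \<in> conn_rel V A"
  using equiv_conn_rel[of V A] unfolding equiv_def trans_def by blast

lemma conn_rel_series:
  assumes wf: "wf_edges V1 A1" "wf_edges V2 A2" and I: "V1 \<inter> V2 = {m}"
    and st: "s \<in> V1" "t \<in> V2"
  shows "(s,t) \<in> conn_rel (V1 \<union> V2) (A1 \<union> A2) \<longleftrightarrow> (s,m) \<in> conn_rel V1 A1 \<and> (m,t) \<in> conn_rel V2 A2"
proof
  assume "(s,m) \<in> conn_rel V1 A1 \<and> (m,t) \<in> conn_rel V2 A2"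
  then show "(s,t) \<in> conn_rel (V1 \<union> V2) (A1 \<union> A2)"
    by (meson conn_rel_mono conn_rel_trans sup_ge1 sup_ge2)
next
  have m: "m \<in> V1" "m \<in> V2" using I by auto
  have wfU: "wf_edges (V1 \<union> V2) (A1 \<union> A2)" using wf by (rule wf_edges_Un)
  assume conn: "(s,t) \<in> conn_rel (V1 \<union> V2) (A1 \<union> A2)"
  have "f s = f t" if "f \<in> labellings (V1 \<union> V2) (A1 \<union> A2)" for f
    using conn that unfolding conn_rel_iff_labellings[OF wfU] by blast
  note glue_eq = this[OF glue_in_labellings[OF wf]]
  have "f1 s = f1 m" if f1: "f1 \<in> labellings V1 A1" for f1
  proof -
    have "restrict (\<lambda>_. f1 m) V2 \<in> labellings V2 A2" by (rule restrict_in_labellings[OF wf(2)]) simp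
    from glue_eq[OF f1 this] show ?thesis using I st m by (auto split: if_splits)
  qed
  moreover have "f2 m = f2 t" if f2: "f2 \<in> labellings V2 A2" for f2
  proof -
    have "restrict (\<lambda>_. f2 m) V1 \<in> labellings V1 A1" by (rule restrict_in_labellings[OF wf(1)]) simp
    from glue_eq[OF this f2] show ?thesis using I st m by (auto split: if_splits)
  qed
  ultimately show "(s,m) \<in> conn_rel V1 A1 \<and> (m,t) \<in> conn_rel V2 A2"
    unfolding conn_rel_iff_labellings[OF wf(1)] conn_rel_iff_labellings[OF wf(2)] using st m by blast
qed

lemma conn_rel_parallel:
  assumes wf: "wf_edges V1 A1" "wf_edges V2 A2" and I: "V1 \<inter> V2 = {s,t}"
  shows "(s,t) \<in> conn_rel (V1 \<union> V2) (A1 \<union> A2) \<longleftrightarrow> (s,t) \<in> conn_rel V1 A1 \<or> (s,t) \<in> conn_rel V2 A2"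
proof
  assume "(s,t) \<in> conn_rel V1 A1 \<or> (s,t) \<in> conn_rel V2 A2"
  then show "(s,t) \<in> conn_rel (V1 \<union> V2) (A1 \<union> A2)" by (meson conn_rel_mono sup_ge1 sup_ge2)
next
  have st: "s \<in> V1" "t \<in> V1" "s \<in> V2" "t \<in> V2" using I by auto
  assume conn: "(s,t) \<in> conn_rel (V1 \<union> V2) (A1 \<union> A2)"
  show "(s,t) \<in> conn_rel V1 A1 \<or> (s,t) \<in> conn_rel V2 A2"
  proof (rule ccontr)
    assume "\<not> ?thesis"
    then have "(s,t) \<notin> conn_rel V1 A1" "(s,t) \<notin> conn_rel V2 A2" by auto
    obtain f1 where f1: "f1 \<in> labellings V1 A1" "f1 s \<noteq> f1 t"
      using separating_labelling[OF wf(1) st(1,2) \<open>(s,t) \<notin> conn_rel V1 A1\<close>] .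
    obtain g2 where g2: "g2 \<in> labellings V2 A2" "g2 s \<noteq> g2 t"
      using separating_labelling[OF wf(2) st(3,4) \<open>(s,t) \<notin> conn_rel V2 A2\<close>] .
    \<comment> \<open>Relabel g2 so that it agrees with f1 on the two shared vertices.\<close>
    let ?f2 = "restrict (\<lambda>x. if g2 x = g2 s then f1 s else f1 t) V2"
    have "?f2 \<in> labellings V2 A2"
      by (rule restrict_in_labellings[OF wf(2)]) (use g2(1) in \<open>auto simp: labellings_def\<close>)
    moreover have "f1 x = ?f2 x" if "x \<in> V1 \<inter> V2" for x using that g2(2) I by auto
    ultimately have "glue V1 V2 f1 ?f2 \<in> labellings (V1 \<union> V2) (A1 \<union> A2)"
      by (rule glue_in_labellings[OF wf f1(1)])
    then have "glue V1 V2 f1 ?f2 s = glue V1 V2 f1 ?f2 t"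
      by (rule labelling_conn_rel_eq[OF wf_edges_Un[OF wf] conn])
    then show False using f1(2) st by simp
  qed
qed

definition expansion_term :: "'a set \<Rightarrow> ('a,'b) edge set \<Rightarrow> complex \<Rightarrow> complex" where
  "expansion_term V A q = (-1) ^ card A * q ^ num_comps V A"

definition chrom_conn :: "'a set \<Rightarrow> ('a,'b) edge set \<Rightarrow> 'a \<Rightarrow> 'a \<Rightarrow> complex \<Rightarrow> complex" where
  "chrom_conn V E s t q = (\<Sum>A\<in>Pow E. if (s,t) \<in> conn_rel V A then expansion_term V A q else 0)"

lemma chrom_poly_expansion: "chrom_poly V E q = (\<Sum>A\<in>Pow E. expansion_term V A q)"
  unfolding chrom_poly_def expansion_term_def ..

lemma chrom_poly_minus_chrom_conn:
  "chrom_poly V E q - chrom_conn V E s t q =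
    (\<Sum>A\<in>Pow E. if (s,t) \<in> conn_rel V A then 0 else expansion_term V A q)"
  unfolding chrom_poly_expansion chrom_conn_def sum_subtractf[symmetric] by (rule sum.cong) auto

lemma sum_Pow_Un:
  assumes "E1 \<inter> E2 = {}"
  shows "(\<Sum>A\<in>Pow (E1 \<union> E2). h A) = (\<Sum>A1\<in>Pow E1. \<Sum>A2\<in>Pow E2. h (A1 \<union> A2))"
proof -
  have inj: "inj_on (\<lambda>(A1,A2). A1 \<union> A2) (Pow E1 \<times> Pow E2)"
  proof (rule inj_onI, clarify)
    fix A1 A2 B1 B2 assume "A1 \<subseteq> E1" "A2 \<subseteq> E2" "B1 \<subseteq> E1" "B2 \<subseteq> E2" "A1 \<union> A2 = B1 \<union> B2"
    then have "(A1 \<union> A2) \<inter> E1 = (B1 \<union> B2) \<inter> E1" "(A1 \<union> A2) \<inter> E2 = (B1 \<union> B2) \<inter> E2" by simp_all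
    then show "A1 = B1 \<and> A2 = B2" using \<open>A1 \<subseteq> E1\<close> \<open>A2 \<subseteq> E2\<close> \<open>B1 \<subseteq> E1\<close> \<open>B2 \<subseteq> E2\<close> assms by blast
  qed
  have img: "Pow (E1 \<union> E2) = (\<lambda>(A1,A2). A1 \<union> A2) ` (Pow E1 \<times> Pow E2)"
  proof (intro equalityI subsetI)
    fix A assume "A \<in> Pow (E1 \<union> E2)"
    then have "A = (\<lambda>(A1,A2). A1 \<union> A2) (A \<inter> E1, A \<inter> E2)" "(A \<inter> E1, A \<inter> E2) \<in> Pow E1 \<times> Pow E2" by auto
    then show "A \<in> (\<lambda>(A1,A2). A1 \<union> A2) ` (Pow E1 \<times> Pow E2)" by (rule image_eqI)
  qed auto
  show ?thesis
    unfolding img sum.reindex[OF inj, unfolded comp_def] sum.cartesian_product by (simp add: split_beta)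
qed

lemma sum_Pow_Un_mult:
  fixes h h1 h2 g1 g2 :: "_ \<Rightarrow> 'c::comm_ring_1"
  assumes "E1 \<inter> E2 = {}"
    and "\<And>A1 A2. A1 \<subseteq> E1 \<Longrightarrow> A2 \<subseteq> E2 \<Longrightarrow> c * h (A1 \<union> A2) = h1 A1 * h2 A2 + g1 A1 * g2 A2"
  shows "c * (\<Sum>A\<in>Pow (E1 \<union> E2). h A) =
    (\<Sum>A\<in>Pow E1. h1 A) * (\<Sum>A\<in>Pow E2. h2 A) + (\<Sum>A\<in>Pow E1. g1 A) * (\<Sum>A\<in>Pow E2. g2 A)"
proof -
  have "c * (\<Sum>A\<in>Pow (E1 \<union> E2). h A) = (\<Sum>A1\<in>Pow E1. \<Sum>A2\<in>Pow E2. c * h (A1 \<union> A2))"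
    by (simp add: sum_Pow_Un[OF assms(1)] sum_distrib_left)
  also have "\<dots> = (\<Sum>A1\<in>Pow E1. \<Sum>A2\<in>Pow E2. h1 A1 * h2 A2 + g1 A1 * g2 A2)"
    using assms(2) by (intro sum.cong refl) auto
  finally show ?thesis by (simp add: sum.distrib sum_product)
qed

lemma card_Un_edges:
  assumes "finite E1" "finite E2" "E1 \<inter> E2 = {}" "A1 \<subseteq> E1" "A2 \<subseteq> E2"
  shows "card (A1 \<union> A2) = card A1 + card A2"
  using assms by (intro card_Un_disjoint) (auto intro: finite_subset)

lemma chrom_poly_series:
  assumes fin: "finite V1" "finite V2" "finite E1" "finite E2" and wf: "wf_edges V1 E1" "wf_edges V2 E2"
    and I: "V1 \<inter> V2 = {m}" and d: "E1 \<inter> E2 = {}" and st: "s \<in> V1" "t \<in> V2"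
  shows "q * chrom_poly (V1 \<union> V2) (E1 \<union> E2) q = chrom_poly V1 E1 q * chrom_poly V2 E2 q"
    and "q * chrom_conn (V1 \<union> V2) (E1 \<union> E2) s t q = chrom_conn V1 E1 s m q * chrom_conn V2 E2 m t q"
proof -
  have weight: "q * expansion_term (V1 \<union> V2) (A1 \<union> A2) q = expansion_term V1 A1 q * expansion_term V2 A2 q"
    and conn: "(s,t) \<in> conn_rel (V1 \<union> V2) (A1 \<union> A2) \<longleftrightarrow> (s,m) \<in> conn_rel V1 A1 \<and> (m,t) \<in> conn_rel V2 A2"
    if "A1 \<subseteq> E1" "A2 \<subseteq> E2" for A1 A2
  proof -
    have wf': "wf_edges V1 A1" "wf_edges V2 A2" using wf that by (auto intro: wf_edges_subset)
    have "q * q ^ num_comps (V1 \<union> V2) (A1 \<union> A2) = q ^ num_comps V1 A1 * q ^ num_comps V2 A2"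
      using num_comps_series[OF fin(1,2) wf' I] by (metis power_Suc power_add Suc_eq_plus1)
    then show "q * expansion_term (V1 \<union> V2) (A1 \<union> A2) q = expansion_term V1 A1 q * expansion_term V2 A2 q"
      unfolding expansion_term_def card_Un_edges[OF fin(3,4) d that] by (simp add: power_add algebra_simps)
    show "(s,t) \<in> conn_rel (V1 \<union> V2) (A1 \<union> A2) \<longleftrightarrow> (s,m) \<in> conn_rel V1 A1 \<and> (m,t) \<in> conn_rel V2 A2"
      by (rule conn_rel_series[OF wf' I st])
  qed
  show "q * chrom_poly (V1 \<union> V2) (E1 \<union> E2) q = chrom_poly V1 E1 q * chrom_poly V2 E2 q"
    unfolding chrom_poly_expansion using sum_Pow_Un_mult[OF d, of q _ _ _ "\<lambda>_. 0" "\<lambda>_. 0"] weight by simp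
  show "q * chrom_conn (V1 \<union> V2) (E1 \<union> E2) s t q = chrom_conn V1 E1 s m q * chrom_conn V2 E2 m t q"
    unfolding chrom_conn_def using sum_Pow_Un_mult[OF d, of q _ _ _ "\<lambda>_. 0" "\<lambda>_. 0"] weight conn by simp
qed

lemma chrom_poly_parallel:
  assumes fin: "finite V1" "finite V2" "finite E1" "finite E2" and wf: "wf_edges V1 E1" "wf_edges V2 E2"
    and I: "V1 \<inter> V2 = {s,t}" and d: "E1 \<inter> E2 = {}"
  shows "q^2 * chrom_poly (V1 \<union> V2) (E1 \<union> E2) q =
      chrom_poly V1 E1 q * chrom_poly V2 E2 q + (q - 1) * chrom_conn V1 E1 s t q * chrom_conn V2 E2 s t q"
    and "q^2 * (chrom_poly (V1 \<union> V2) (E1 \<union> E2) q - chrom_conn (V1 \<union> V2) (E1 \<union> E2) s t q) =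
      (chrom_poly V1 E1 q - chrom_conn V1 E1 s t q) * (chrom_poly V2 E2 q - chrom_conn V2 E2 s t q)"
proof -
  let ?c1 = "\<lambda>A1. (s,t) \<in> conn_rel V1 A1" and ?c2 = "\<lambda>A2. (s,t) \<in> conn_rel V2 A2"
  let ?w1 = "\<lambda>A1. expansion_term V1 A1 q" and ?w2 = "\<lambda>A2. expansion_term V2 A2 q"
  have weight: "q^2 * expansion_term (V1 \<union> V2) (A1 \<union> A2) q =
      ?w1 A1 * ?w2 A2 + (if ?c1 A1 \<and> ?c2 A2 then q - 1 else 0) * ?w1 A1 * ?w2 A2"
    and conn: "(s,t) \<in> conn_rel (V1 \<union> V2) (A1 \<union> A2) \<longleftrightarrow> ?c1 A1 \<or> ?c2 A2"
    if "A1 \<subseteq> E1" "A2 \<subseteq> E2" for A1 A2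
  proof -
    have wf': "wf_edges V1 A1" "wf_edges V2 A2" using wf that by (auto intro: wf_edges_subset)
    have "q^2 * q ^ num_comps (V1 \<union> V2) (A1 \<union> A2) =
        q ^ num_comps V1 A1 * q ^ num_comps V2 A2 * (if ?c1 A1 \<and> ?c2 A2 then q else 1)"
    proof -
      have "q ^ (num_comps (V1 \<union> V2) (A1 \<union> A2) + 2) =
          q ^ (num_comps V1 A1 + num_comps V2 A2 + (if ?c1 A1 \<and> ?c2 A2 then 1 else 0))"
        by (simp only: num_comps_parallel[OF fin(1,2) wf' I])
      then show ?thesis by (simp add: power_add power2_eq_square mult_ac)
    qed
    then show "q^2 * expansion_term (V1 \<union> V2) (A1 \<union> A2) q =
        ?w1 A1 * ?w2 A2 + (if ?c1 A1 \<and> ?c2 A2 then q - 1 else 0) * ?w1 A1 * ?w2 A2"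
      unfolding expansion_term_def card_Un_edges[OF fin(3,4) d that]
      by (simp add: power_add algebra_simps split: if_splits)
    show "(s,t) \<in> conn_rel (V1 \<union> V2) (A1 \<union> A2) \<longleftrightarrow> ?c1 A1 \<or> ?c2 A2"
      by (rule conn_rel_parallel[OF wf' I])
  qed
  have "q^2 * chrom_poly (V1 \<union> V2) (E1 \<union> E2) q =
      chrom_poly V1 E1 q * chrom_poly V2 E2 q +
      (\<Sum>A\<in>Pow E1. (q - 1) * (if ?c1 A then ?w1 A else 0)) * (\<Sum>A\<in>Pow E2. if ?c2 A then ?w2 A else 0)"
    unfolding chrom_poly_expansion by (rule sum_Pow_Un_mult[OF d]) (simp add: weight)
  then show "q^2 * chrom_poly (V1 \<union> V2) (E1 \<union> E2) q =
      chrom_poly V1 E1 q * chrom_poly V2 E2 q + (q - 1) * chrom_conn V1 E1 s t q * chrom_conn V2 E2 s t q"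
    unfolding chrom_conn_def by (simp add: sum_distrib_left)
  show "q^2 * (chrom_poly (V1 \<union> V2) (E1 \<union> E2) q - chrom_conn (V1 \<union> V2) (E1 \<union> E2) s t q) =
      (chrom_poly V1 E1 q - chrom_conn V1 E1 s t q) * (chrom_poly V2 E2 q - chrom_conn V2 E2 s t q)"
    unfolding chrom_poly_minus_chrom_conn
    using sum_Pow_Un_mult[OF d, of "q^2" _ _ _ "\<lambda>_. 0" "\<lambda>_. 0"] weight conn by simp
qed

lemma sum_Pow_insert:
  assumes "finite A" "e \<notin> A"
  shows "(\<Sum>X\<in>Pow (insert e A). h X) = (\<Sum>X\<in>Pow A. h X) + (\<Sum>X\<in>Pow A. h (insert e X))"
proof -
  have "inj_on (insert e) (Pow A)" using assms(2) by (intro inj_onI) (auto simp: insert_ident)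
  moreover have "Pow A \<inter> insert e ` Pow A = {}" using assms(2) by auto
  ultimately show ?thesis
    using assms(1) by (simp add: Pow_insert sum.union_disjoint sum.reindex)
qed

lemmas subgraph_evaluation =
  sum_Pow_insert num_comps_insert_edge conn_rel_insert_edge conn_rel_empty num_comps_empty
  expansion_term_def wf_edges_def doubleton_eq_iff

lemma K2_chrom_poly:
  assumes "s \<noteq> t"
  shows "chrom_poly {s,t} {(l,{s,t})} q = q * (q - 1)"
    and "chrom_conn {s,t} {(l,{s,t})} s t q = - q"
  using assms
  by (simp_all add: chrom_poly_expansion chrom_conn_def subgraph_evaluation power2_eq_square algebra_simps)

lemma wheatstone_chrom_poly:
  fixes l1 l2 l3 l4 l5 :: 'b
  assumes "distinct [s,a,b,t]"
  defines "E \<equiv> {(l1,{s,a}), (l2,{s,b}), (l3,{a,b}), (l4,{a,t}), (l5,{b,t})}"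
  shows "chrom_poly {s,a,b,t} E q = q * (q - 1) * (q - 2)^2"
    and "chrom_conn {s,a,b,t} E s t q = 2 * q * (q - 2)"
proof -
  have d: "s \<noteq> a" "s \<noteq> b" "s \<noteq> t" "a \<noteq> b" "a \<noteq> t" "b \<noteq> t"
    "a \<noteq> s" "b \<noteq> s" "t \<noteq> s" "b \<noteq> a" "t \<noteq> a" "t \<noteq> b" using assms(1) by auto
  show "chrom_poly {s,a,b,t} E q = q * (q - 1) * (q - 2)^2"
    unfolding E_def chrom_poly_expansion
    by (simp add: d subgraph_evaluation power2_eq_square algebra_simps)
  show "chrom_conn {s,a,b,t} E s t q = 2 * q * (q - 2)"
    unfolding E_def chrom_conn_def
    by (simp add: d subgraph_evaluation power2_eq_square algebra_simps)
qed

lemma inW_basic: "inW V E s t \<Longrightarrow> finite V \<and> finite E \<and> wf_edges V E \<and> s \<in> V \<and> t \<in> V \<and> s \<noteq> t"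
proof (induction rule: inW.induct)
  case (K2 s t l)
  then show ?case unfolding wf_edges_def by auto
next
  case (Wheatstone s a b t l1 l2 l3 l4 l5)
  then show ?case unfolding wf_edges_def by auto
next
  case (parallel V1 E1 s t V2 E2)
  then show ?case using wf_edges_Un by auto
next
  case (series V1 E1 s m V2 E2 t)
  then show ?case using wf_edges_Un by auto
qed

definition edge_disjoint_paths :: "'a set \<Rightarrow> ('a,'b) edge set \<Rightarrow> 'a \<Rightarrow> 'a \<Rightarrow> ('a list \<times> ('a,'b) edge list) list \<Rightarrow> bool" where
  "edge_disjoint_paths V E x y P \<longleftrightarrow> (\<forall>i < length P. is_path V E x y (fst (P ! i)) (snd (P ! i))) \<and>
      (\<forall>i < length P. \<forall>j < length P. i \<noteq> j \<longrightarrow> set (snd (P ! i)) \<inter> set (snd (P ! j)) = {})"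

lemma is_path_mono: "is_path V E x y vs es \<Longrightarrow> V \<subseteq> V' \<Longrightarrow> E \<subseteq> E' \<Longrightarrow> is_path V' E' x y vs es"
  unfolding is_path_def by auto

lemma is_path_edges: "is_path V E x y vs es \<Longrightarrow> set es \<subseteq> E"
  unfolding is_path_def by (metis in_set_conv_nth subsetI)

lemma is_path_verts: "is_path V E x y vs es \<Longrightarrow> set vs \<subseteq> V"
  unfolding is_path_def by auto

lemma is_path_ends: "is_path V E x y vs es \<Longrightarrow> x \<in> set vs \<and> y \<in> set vs"
  unfolding is_path_def by auto

lemma is_path_ne: "is_path V E x y vs es \<Longrightarrow> x \<noteq> y \<Longrightarrow> es \<noteq> []"
  unfolding is_path_def by (cases vs) auto

lemma path_rev:
  assumes "is_path V E x y vs es" shows "is_path V E y x (rev vs) (rev es)"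
proof -
  have p: "vs \<noteq> []" "hd vs = x" "last vs = y" "distinct vs" "set vs \<subseteq> V" "length vs = Suc (length es)"
    "\<And>i. i < length es \<Longrightarrow> es ! i \<in> E \<and> snd (es ! i) = {vs ! i, vs ! Suc i}"
    using assms unfolding is_path_def by auto
  show ?thesis unfolding is_path_def
  proof (intro conjI allI impI)
    show "rev vs \<noteq> []" "distinct (rev vs)" "set (rev vs) \<subseteq> V" "length (rev vs) = Suc (length (rev es))"
      using p by auto
    show "hd (rev vs) = y" using p by (simp add: hd_rev)
    show "last (rev vs) = x" using p by (simp add: last_rev)
    fix i assume i: "i < length (rev es)"
    let ?j = "length es - Suc i"
    have j: "?j < length es" using i by simp
    have e: "rev es ! i = es ! ?j" using i by (simp add: rev_nth)
    have v1: "rev vs ! i = vs ! Suc ?j" using i p(6) by (simp add: rev_nth Suc_diff_Suc)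
    have v2: "rev vs ! Suc i = vs ! ?j" using i p(6) by (simp add: rev_nth)
    show "rev es ! i \<in> E" using p(7)[OF j] e by simp
    show "snd (rev es ! i) = {rev vs ! i, rev vs ! Suc i}" using p(7)[OF j] e v1 v2 by (simp add: insert_commute)
  qed
qed

lemma path_concat:
  assumes p1: "is_path V E x y vs1 es1" and p2: "is_path V E y z vs2 es2"
    and d: "set vs1 \<inter> set vs2 = {y}"
  shows "is_path V E x z (vs1 @ tl vs2) (es1 @ es2)"
proof -
  have a: "vs1 \<noteq> []" "hd vs1 = x" "last vs1 = y" "distinct vs1" "set vs1 \<subseteq> V" "length vs1 = Suc (length es1)"
    "\<And>i. i < length es1 \<Longrightarrow> es1 ! i \<in> E \<and> snd (es1 ! i) = {vs1 ! i, vs1 ! Suc i}"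
    using p1 unfolding is_path_def by auto
  have b: "vs2 \<noteq> []" "hd vs2 = y" "last vs2 = z" "distinct vs2" "set vs2 \<subseteq> V" "length vs2 = Suc (length es2)"
    "\<And>i. i < length es2 \<Longrightarrow> es2 ! i \<in> E \<and> snd (es2 ! i) = {vs2 ! i, vs2 ! Suc i}"
    using p2 unfolding is_path_def by auto
  obtain w ws where vs2: "vs2 = w # ws" using b(1) by (cases vs2) auto
  have w: "w = y" using b(2) vs2 by simp
  have last1: "vs1 ! length es1 = y" using a(1,3,6) by (simp add: last_conv_nth)
  have idx: "(vs1 @ tl vs2) ! (length es1 + j) = vs2 ! j" if "j \<le> length es2" for j
  proof (cases j)
    case 0 then show ?thesis using a(6) last1 vs2 w by (simp add: nth_append)
  next
    case (Suc k) then show ?thesis using a(6) vs2 by (simp add: nth_append)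
  qed
  show ?thesis unfolding is_path_def
  proof (intro conjI allI impI)
    show "vs1 @ tl vs2 \<noteq> []" using a(1) by simp
    show "hd (vs1 @ tl vs2) = x" using a(1,2) by simp
    show "last (vs1 @ tl vs2) = z"
    proof (cases ws)
      case Nil then show ?thesis using a(3) b(3) vs2 w by simp
    next
      case (Cons u us) then show ?thesis using b(3) vs2 by simp
    qed
    show "distinct (vs1 @ tl vs2)" using a(4) b(4) d vs2 w by auto
    show "set (vs1 @ tl vs2) \<subseteq> V" using a(5) b(5) vs2 by auto
    show "length (vs1 @ tl vs2) = Suc (length (es1 @ es2))" using a(6) b(6) vs2 by simp
    fix i assume i: "i < length (es1 @ es2)"
    have goal: "(es1 @ es2) ! i \<in> E \<and> snd ((es1 @ es2) ! i) = {(vs1 @ tl vs2) ! i, (vs1 @ tl vs2) ! Suc i}"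
    proof (cases "i < length es1")
      case True
      then show ?thesis using a(6,7) by (simp add: nth_append)
    next
      case False
      define j where "j = i - length es1"
      have ij: "i = length es1 + j" and j: "j < length es2" using False i unfolding j_def by auto
      have "(es1 @ es2) ! i = es2 ! j" using ij by (simp add: nth_append)
      moreover have "(vs1 @ tl vs2) ! i = vs2 ! j" using idx[of j] j ij by simp
      moreover have "(vs1 @ tl vs2) ! Suc i = vs2 ! Suc j" using idx[of "Suc j"] j ij by simp
      ultimately show ?thesis using b(7)[OF j] by simp
    qed
    then show "(es1 @ es2) ! i \<in> E" by simp
    from goal show "snd ((es1 @ es2) ! i) = {(vs1 @ tl vs2) ! i, (vs1 @ tl vs2) ! Suc i}" by simp
  qed
qed

lemma is_path_series:
  assumes p1: "is_path V1 E1 s m vs1 es1" and p2: "is_path V2 E2 m t vs2 es2" and I: "V1 \<inter> V2 = {m}"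
  shows "is_path (V1 \<union> V2) (E1 \<union> E2) s t (vs1 @ tl vs2) (es1 @ es2)"
proof (rule path_concat)
  show "is_path (V1 \<union> V2) (E1 \<union> E2) s m vs1 es1" using p1 by (rule is_path_mono) auto
  show "is_path (V1 \<union> V2) (E1 \<union> E2) m t vs2 es2" using p2 by (rule is_path_mono) auto
  show "set vs1 \<inter> set vs2 = {m}"
    using is_path_verts[OF p1] is_path_verts[OF p2] is_path_ends[OF p1] is_path_ends[OF p2] I by auto
qed

lemma edge_disjoint_paths_mono: "edge_disjoint_paths V E x y P \<Longrightarrow> V \<subseteq> V' \<Longrightarrow> E \<subseteq> E' \<Longrightarrow> edge_disjoint_paths V' E' x y P"
  unfolding edge_disjoint_paths_def by (metis is_path_mono)

lemma edge_disjoint_paths_edges: "edge_disjoint_paths V E x y P \<Longrightarrow> p \<in> set P \<Longrightarrow> set (snd p) \<subseteq> E"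
  unfolding edge_disjoint_paths_def by (auto simp: in_set_conv_nth dest!: is_path_edges)

lemma edge_disjoint_paths_append:
  assumes "edge_disjoint_paths V E x y P1" "edge_disjoint_paths V E x y P2"
    and "\<And>p p'. p \<in> set P1 \<Longrightarrow> p' \<in> set P2 \<Longrightarrow> set (snd p) \<inter> set (snd p') = {}"
  shows "edge_disjoint_paths V E x y (P1 @ P2)"
  unfolding edge_disjoint_paths_def
proof (intro conjI allI impI)
  fix i assume i: "i < length (P1 @ P2)"
  show "is_path V E x y (fst ((P1 @ P2) ! i)) (snd ((P1 @ P2) ! i))"
    using assms(1,2) i unfolding edge_disjoint_paths_def by (cases "i < length P1") (auto simp: nth_append)
next
  fix i j assume i: "i < length (P1 @ P2)" and j: "j < length (P1 @ P2)" and ij: "i \<noteq> j"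
  have m1: "P1 ! k \<in> set P1" if "k < length P1" for k using that by simp
  have m2: "P2 ! k \<in> set P2" if "k < length P2" for k using that by simp
  show "set (snd ((P1 @ P2) ! i)) \<inter> set (snd ((P1 @ P2) ! j)) = {}"
  proof (cases "i < length P1"; cases "j < length P1")
    assume "i < length P1" "j < length P1"
    then show ?thesis using assms(1) ij unfolding edge_disjoint_paths_def by (simp add: nth_append)
  next
    assume a: "i < length P1" "\<not> j < length P1"
    then show ?thesis using assms(3)[OF m1[of i] m2[of "j - length P1"]] j by (simp add: nth_append)
  next
    assume a: "\<not> i < length P1" "j < length P1"
    then show ?thesis using assms(3)[OF m1[of j] m2[of "i - length P1"]] i by (simp add: nth_append inf_commute)
  next
    assume a: "\<not> i < length P1" "\<not> j < length P1"
    then show ?thesis using assms(2) ij i j unfolding edge_disjoint_paths_def by (simp add: nth_append)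
  qed
qed

lemma edge_disjoint_paths_single: "is_path V E x y vs es \<Longrightarrow> edge_disjoint_paths V E x y [(vs,es)]"
  unfolding edge_disjoint_paths_def by simp

lemma length_le_card_edges:
  assumes fin: "finite E" and xy: "x \<noteq> y" and P: "edge_disjoint_paths V E x y P"
  shows "length P \<le> card E"
proof -
  have ne: "snd (P ! i) \<noteq> []" if "i < length P" for i
    using P that xy is_path_ne unfolding edge_disjoint_paths_def by metis
  define g where "g = (\<lambda>i. hd (snd (P ! i)))"
  have inE: "g i \<in> E" if "i < length P" for i
  proof -
    have "g i \<in> set (snd (P ! i))" unfolding g_def using ne[OF that] by simp
    moreover have "set (snd (P ! i)) \<subseteq> E" using P that unfolding edge_disjoint_paths_def by (auto dest: is_path_edges)
    ultimately show ?thesis by auto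
  qed
  have "inj_on g {..<length P}"
  proof (rule inj_onI)
    fix i j assume i: "i \<in> {..<length P}" and j: "j \<in> {..<length P}" and e: "g i = g j"
    show "i = j"
    proof (rule ccontr)
      assume "i \<noteq> j"
      then have "set (snd (P ! i)) \<inter> set (snd (P ! j)) = {}" using P i j unfolding edge_disjoint_paths_def by auto
      moreover have "g i \<in> set (snd (P ! i))" "g j \<in> set (snd (P ! j))" unfolding g_def using ne i j by auto
      ultimately show False using e by auto
    qed
  qed
  then have c: "card (g ` {..<length P}) = length P" by (simp add: card_image)
  have sub: "g ` {..<length P} \<subseteq> E" using inE by auto
  have "card (g ` {..<length P}) \<le> card E" by (rule card_mono[OF fin sub])
  then show ?thesis using c by simp
qed

lemma length_le_maxmaxflow:
  assumes fV: "finite V" and fE: "finite E" and x: "x \<in> V" and y: "y \<in> V" and xy: "x \<noteq> y"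
    and P: "edge_disjoint_paths V E x y P"
  shows "length P \<le> maxmaxflow V E"
proof -
  let ?S = "{n. \<exists>P :: ('a list \<times> ('a,'b) edge list) list.
      length P = n \<and> (\<forall>i < n. is_path V E x y (fst (P ! i)) (snd (P ! i))) \<and>
      (\<forall>i < n. \<forall>j < n. i \<noteq> j \<longrightarrow> set (snd (P ! i)) \<inter> set (snd (P ! j)) = {})}"
  have "?S \<subseteq> {..card E}"
  proof
    fix n assume "n \<in> ?S"
    then obtain Q :: "('a list \<times> ('a,'b) edge list) list" where "length Q = n" "edge_disjoint_paths V E x y Q"
      unfolding edge_disjoint_paths_def by auto
    then show "n \<in> {..card E}" using length_le_card_edges[OF fE xy] by auto
  qed
  then have finS: "finite ?S" by (rule finite_subset) simp
  have "length P \<in> ?S" using P unfolding edge_disjoint_paths_def by auto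
  then have "length P \<le> local_edge_conn V E x y" unfolding local_edge_conn_def using finS by (rule Max_ge[rotated])
  also have "\<dots> \<le> maxmaxflow V E" unfolding maxmaxflow_def
  proof (rule Max_ge)
    have "{local_edge_conn V E x y |x y. x \<in> V \<and> y \<in> V \<and> x \<noteq> y} \<subseteq> (\<lambda>(x,y). local_edge_conn V E x y) ` (V \<times> V)"
      by auto
    then show "finite {local_edge_conn V E x y |x y. x \<in> V \<and> y \<in> V \<and> x \<noteq> y}"
      by (rule finite_subset) (use fV in simp)
    show "local_edge_conn V E x y \<in> {local_edge_conn V E x y |x y. x \<in> V \<and> y \<in> V \<and> x \<noteq> y}"
      using x y xy by auto
  qed
  finally show ?thesis .
qed

lemma inW_path: "inW V E s t \<Longrightarrow> \<exists>vs es. is_path V E s t vs es"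
proof (induction rule: inW.induct)
  case (K2 s t l)
  have "is_path {s,t} {(l,{s,t})} s t [s,t] [(l,{s,t})]" using K2 unfolding is_path_def by auto
  then show ?case by blast
next
  case (Wheatstone s a b t l1 l2 l3 l4 l5)
  have "is_path {s,a,b,t} {(l1, {s, a}), (l2, {s, b}), (l3, {a, b}), (l4, {a, t}), (l5, {b, t})} s t [s,a,t] [(l1,{s,a}),(l4,{a,t})]"
    using Wheatstone unfolding is_path_def by (auto simp: less_Suc_eq)
  then show ?case by blast
next
  case (parallel V1 E1 s t V2 E2)
  then obtain vs es where "is_path V1 E1 s t vs es" by blast
  then have "is_path (V1 \<union> V2) (E1 \<union> E2) s t vs es" by (rule is_path_mono) auto
  then show ?case by blast
next
  case (series V1 E1 s m V2 E2 t)
  then obtain vs1 es1 vs2 es2 where "is_path V1 E1 s m vs1 es1" "is_path V2 E2 m t vs2 es2" by blast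
  from is_path_series[OF this series.hyps(3)] show ?case by blast
qed

definition rho_star_fun :: "nat \<Rightarrow> real \<Rightarrow> real" where
  "rho_star_fun L r = real L * ln (1 + r) - (real L - 1) * ln (1 + r^2) - ln 2"

definition rho_star_fun_deriv :: "nat \<Rightarrow> real \<Rightarrow> real" where
  "rho_star_fun_deriv L r = real L / (1 + r) - (real L - 1) * (2 * r) / (1 + r^2)"

lemma has_real_derivative_rho_star_fun: assumes "r > -1" shows "(rho_star_fun L has_real_derivative rho_star_fun_deriv L r) (at r)"
proof -
  have p1: "1 + r > 0" using assms by simp
  have p2: "1 + r^2 > 0" by (simp add: add_pos_nonneg)
  have d1: "((\<lambda>r. ln (1 + r)) has_real_derivative (1 / (1 + r))) (at r)"
    using p1 by (auto intro!: derivative_eq_intros)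
  have d2: "((\<lambda>r. ln (1 + r^2)) has_real_derivative ((2 * r) / (1 + r^2))) (at r)"
    using p2 by (auto intro!: derivative_eq_intros simp: power2_eq_square)
  have "((\<lambda>r. real L * ln (1 + r) - (real L - 1) * ln (1 + r^2) - ln 2) has_real_derivative
     (real L * (1 / (1 + r)) - (real L - 1) * ((2 * r) / (1 + r^2)) - 0)) (at r)"
    by (intro DERIV_diff DERIV_cmult d1 d2 DERIV_const)
  then show ?thesis unfolding rho_star_fun_def rho_star_fun_deriv_def by simp
qed

lemma isCont_rho_star_fun: assumes "r > -1" shows "isCont (rho_star_fun L) r"
  using has_real_derivative_rho_star_fun[OF assms] by (rule DERIV_isCont)

lemma rho_star_fun_le_iff:
  assumes L: "L \<ge> 1" and r: "r > -1"
  shows "(1 + r)^L \<le> 2 * (1 + r^2)^(L - 1) \<longleftrightarrow> rho_star_fun L r \<le> 0"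
    and "(1 + r)^L = 2 * (1 + r^2)^(L - 1) \<longleftrightarrow> rho_star_fun L r = 0"
proof -
  have p1: "1 + r > 0" using r by simp
  have p2: "1 + r^2 > 0" by (simp add: add_pos_nonneg)
  have lA: "ln ((1 + r)^L) = real L * ln (1 + r)" using p1 by (simp add: ln_realpow)
  have lB: "ln (2 * (1 + r^2)^(L - 1)) = ln 2 + (real L - 1) * ln (1 + r^2)"
    using p2 L by (simp add: ln_mult ln_realpow of_nat_diff)
  have A: "(1 + r)^L > 0" using p1 by simp
  have B: "2 * (1 + r^2)^(L - 1) > 0" using p2 by simp
  show "(1 + r)^L \<le> 2 * (1 + r^2)^(L - 1) \<longleftrightarrow> rho_star_fun L r \<le> 0"
    using ln_le_cancel_iff[OF A B] lA lB unfolding rho_star_fun_def by linarith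
  show "(1 + r)^L = 2 * (1 + r^2)^(L - 1) \<longleftrightarrow> rho_star_fun L r = 0"
    using ln_inj_iff[OF A B] lA lB unfolding rho_star_fun_def by linarith
qed

lemma rho_star_fun_0: "rho_star_fun L 0 < 0" unfolding rho_star_fun_def by simp

lemma rho_star_fun_1: assumes "L \<ge> 1" shows "rho_star_fun L 1 = 0"
  unfolding rho_star_fun_def using assms by (simp add: algebra_simps of_nat_diff)

lemma three_halves_power_gt: "(3/2::real)^(n+3) > 2 * (5/4)^(n+2)"
proof (induction n)
  case 0 then show ?case by (simp add: power_divide)
next
  case (Suc n)
  have "2 * (5/4::real)^(Suc n + 2) = (5/4) * (2 * (5/4)^(n+2))" by simp
  also have "\<dots> < (5/4) * (3/2)^(n+3)" using Suc by simp
  also have "\<dots> \<le> (3/2) * (3/2)^(n+3)" by simp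
  also have "\<dots> = (3/2)^(Suc n + 3)" by (simp only: add_Suc power_Suc)
  finally show ?case .
qed

lemma rho_star_fun_half: assumes "L \<ge> 3" shows "rho_star_fun L (1/2) > 0"
proof -
  obtain n where n: "L = n + 3" using assms by (metis add.commute le_iff_add)
  have "(1 + 1/2::real)^L > 2 * (1 + (1/2)^2)^(L - 1)"
    using three_halves_power_gt[of n] unfolding n by (simp add: numeral_eq_Suc)
  then have "\<not> rho_star_fun L (1/2) \<le> 0" using rho_star_fun_le_iff(1)[of L "1/2"] assms by simp
  then show ?thesis by simp
qed

lemma rho_star_fun_deriv_strict_decreasing:
  assumes L: "L \<ge> 3" and xy: "0 \<le> x" "x < y" "y \<le> 1"
  shows "rho_star_fun_deriv L y < rho_star_fun_deriv L x"
proof -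
  have a: "real L / (1 + y) < real L / (1 + x)" using L xy by (simp add: frac_less2)
  have b: "x / (1 + x^2) \<le> y / (1 + y^2)"
  proof -
    have "x * (1 + y^2) \<le> y * (1 + x^2)"
    proof -
      have "y * (1 + x^2) - x * (1 + y^2) = (y - x) * (1 - x * y)" by (simp add: algebra_simps power2_eq_square)
      moreover have "x * y \<le> 1" using xy by (intro mult_le_one) auto
      ultimately have "y * (1 + x^2) - x * (1 + y^2) \<ge> 0" using xy by simp
      then show ?thesis by simp
    qed
    then show ?thesis by (simp add: field_simps add_pos_nonneg)
  qed
  have c: "(real L - 1) * (2 * x) / (1 + x^2) \<le> (real L - 1) * (2 * y) / (1 + y^2)"
  proof -
    have "(real L - 1) * (2 * x) / (1 + x^2) = 2 * (real L - 1) * (x / (1 + x^2))" by simp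
    also have "\<dots> \<le> 2 * (real L - 1) * (y / (1 + y^2))" using b L by (intro mult_left_mono) auto
    also have "\<dots> = (real L - 1) * (2 * y) / (1 + y^2)" by simp
    finally show ?thesis .
  qed
  show ?thesis unfolding rho_star_fun_deriv_def using a c by linarith
qed

lemma rho_star_fun_no_two_zeros:
  assumes L: "L \<ge> 3" and r: "0 < r1" "r1 < r2" "r2 < 1"
  shows "rho_star_fun L r1 \<noteq> 0 \<or> rho_star_fun L r2 \<noteq> 0"
proof (rule ccontr)
  assume "\<not> ?thesis"
  then have z: "rho_star_fun L r1 = 0" "rho_star_fun L r2 = 0" by auto
  have cont: "continuous_on {a..b} (rho_star_fun L)" if "a > -1" for a b
    using that by (intro continuous_at_imp_continuous_on) (auto intro: isCont_rho_star_fun)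
  have diff: "rho_star_fun L differentiable (at x)" if "x > -1" for x
    unfolding real_differentiable_def using has_real_derivative_rho_star_fun[OF that] by blast
  text \<open>Besides r1 and r2, the function also vanishes at 1; two applications of Rolle's theorem
    then contradict the strict monotonicity of the derivative.\<close>
  obtain z1 where z1: "r1 < z1" "z1 < r2" "DERIV (rho_star_fun L) z1 :> 0"
    using Rolle[OF r(2) _ cont diff] z r by force
  obtain z2 where z2: "r2 < z2" "z2 < 1" "DERIV (rho_star_fun L) z2 :> 0"
    using Rolle[OF r(3) _ cont diff] z rho_star_fun_1[of L] L r by force
  have "rho_star_fun_deriv L z1 = 0" "rho_star_fun_deriv L z2 = 0"
    using DERIV_unique[OF z1(3) has_real_derivative_rho_star_fun] DERIV_unique[OF z2(3) has_real_derivative_rho_star_fun]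
      r z1 z2 by auto
  moreover have "rho_star_fun_deriv L z2 < rho_star_fun_deriv L z1"
    using r z1 z2 by (intro rho_star_fun_deriv_strict_decreasing[OF L]) auto
  ultimately show False by simp
qed

lemma rho_star_fun_zero_unique:
  assumes "L \<ge> 3" "0 < r1" "r1 < 1" "0 < r2" "r2 < 1" "rho_star_fun L r1 = 0" "rho_star_fun L r2 = 0"
  shows "r1 = r2"
  using assms rho_star_fun_no_two_zeros[of L r1 r2] rho_star_fun_no_two_zeros[of L r2 r1]
  by (cases r1 r2 rule: linorder_cases) auto

lemma rho_star_fun_has_zero:
  assumes L: "L \<ge> 3" and "0 < r" and "rho_star_fun L r \<ge> 0"
  shows "\<exists>x. 0 < x \<and> x \<le> r \<and> rho_star_fun L x = 0"
proof -
  have "\<exists>x\<ge>0. x \<le> r \<and> rho_star_fun L x = 0"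
    using assms rho_star_fun_0[of L] by (intro IVT) (auto intro: isCont_rho_star_fun)
  then show ?thesis using rho_star_fun_0[of L] by (metis le_less)
qed

lemma rho_star:
  assumes L: "L \<ge> 3"
  shows "0 < rho_star L" "rho_star L < 1" "rho_star_fun L (rho_star L) = 0"
proof -
  have char: "(0 < r \<and> r < 1 \<and> (1 + r) ^ L = 2 * (1 + r\<^sup>2) ^ (L - 1)) \<longleftrightarrow>
      (0 < r \<and> r < 1 \<and> rho_star_fun L r = 0)" for r :: real
  proof (cases "0 < r")
    case True
    then have "r > -1" by simp
    with rho_star_fun_le_iff(2)[of L r] L show ?thesis by simp
  qed simp
  have "\<exists>!r. 0 < r \<and> r < 1 \<and> rho_star_fun L r = 0"
  proof (rule ex_ex1I)
    obtain r where "0 < r" "r \<le> 1/2" "rho_star_fun L r = 0"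
      using rho_star_fun_has_zero[OF L _ less_imp_le[OF rho_star_fun_half[OF L]]] by auto
    then show "\<exists>r. 0 < r \<and> r < 1 \<and> rho_star_fun L r = 0" by force
  next
    fix r r' :: real assume "0 < r \<and> r < 1 \<and> rho_star_fun L r = 0" "0 < r' \<and> r' < 1 \<and> rho_star_fun L r' = 0"
    then show "r = r'" using rho_star_fun_zero_unique[OF L, of r r'] by blast
  qed
  from theI'[OF this] show "0 < rho_star L" "rho_star L < 1" "rho_star_fun L (rho_star L) = 0"
    unfolding rho_star_def char by blast+
qed

lemma power_le_below_rho_star:
  assumes L: "L \<ge> 3" and r: "0 < r" "r \<le> rho_star L"
  shows "(1 + r)^L \<le> 2 * (1 + r^2)^(L - 1)"
proof -
  note rs = rho_star[OF L]
  have "rho_star_fun L r \<le> 0"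
  proof (rule ccontr)
    assume pos: "\<not> rho_star_fun L r \<le> 0"
    then obtain x where x: "0 < x" "x \<le> r" "rho_star_fun L x = 0"
      using rho_star_fun_has_zero[OF L r(1)] by fastforce
    have "x < 1" using x(2) r(2) rs(2) by linarith
    have "x = rho_star L" by (rule rho_star_fun_zero_unique[OF L x(1) \<open>x < 1\<close> rs(1,2) x(3) rs(3)])
    then have "r = rho_star L" using x(2) r(2) by linarith
    then show False using pos rs(3) by simp
  qed
  moreover have "r > -1" using r(1) by simp
  ultimately show ?thesis using rho_star_fun_le_iff(1)[of L r] L by simp
qed

lemma X_bounds:
  assumes L: "L \<ge> 3" and r0: "0 < \<rho>" and r1: "\<rho> \<le> rho_star L"
    and X: "X = (2 / (1 + \<rho>)) powr (1 / (real L - 1))"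
  shows "\<rho> < 1" "X > 1" "X ^ (L - 1) = 2 / (1 + \<rho>)" "(1 + \<rho>) / (1 + \<rho>^2) \<le> X" "\<rho> * X < 1"
proof -
  show rl: "\<rho> < 1" using r1 rho_star(2)[OF L] by simp
  have c1: "2 / (1 + \<rho>) > 1" using rl r0 by simp
  have e0: "1 / (real L - 1) > 0" using L by simp
  have "(2 / (1 + \<rho>)) powr 0 < (2 / (1 + \<rho>)) powr (1 / (real L - 1))"
    by (rule powr_less_mono[OF e0 c1])
  then show X1: "X > 1" using X c1 r0 by simp
  have "X ^ (L - 1) = X powr (real (L - 1))" using X1 by (simp add: powr_realpow)
  also have "\<dots> = (2 / (1 + \<rho>)) powr (1 / (real L - 1) * real (L - 1))" unfolding X by (simp add: powr_powr)
  also have "1 / (real L - 1) * real (L - 1) = 1" using L by (simp add: of_nat_diff)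
  finally show XL: "X ^ (L - 1) = 2 / (1 + \<rho>)" using c1 r0 by simp
  have pr: "(1 + \<rho>)^L \<le> 2 * (1 + \<rho>^2)^(L - 1)" by (rule power_le_below_rho_star[OF L r0 r1])
  have q2: "1 + \<rho>^2 > 0" by (simp add: add_pos_nonneg)
  have "((1 + \<rho>) / (1 + \<rho>^2)) ^ (L - 1) = (1 + \<rho>)^(L - 1) / (1 + \<rho>^2)^(L - 1)" by (simp add: power_divide)
  also have "\<dots> \<le> 2 / (1 + \<rho>)"
  proof -
    have "(1 + \<rho>)^(L - 1) * (1 + \<rho>) = (1 + \<rho>)^L" using L by (simp flip: power_Suc2)
    then have "(1 + \<rho>)^(L - 1) * (1 + \<rho>) \<le> 2 * (1 + \<rho>^2)^(L - 1)" using pr by simp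
    then show ?thesis using q2 r0 by (simp add: field_simps)
  qed
  finally have "((1 + \<rho>) / (1 + \<rho>^2)) ^ (L - 1) \<le> X ^ (L - 1)" using XL by simp
  moreover have "L - 1 = Suc (L - 2)" using L by simp
  ultimately show "(1 + \<rho>) / (1 + \<rho>^2) \<le> X" using power_le_imp_le_base[of _ "L - 2" X] X1 by simp
  have "X ^ 1 \<le> X ^ (L - 1)" using L X1 by (intro power_increasing) auto
  then have "\<rho> * X \<le> \<rho> * (2 / (1 + \<rho>))" using XL r0 by (intro mult_left_mono) auto
  also have "\<dots> < 1" using r0 rl by (simp add: field_simps)
  finally show "\<rho> * X < 1" .
qed

definition parallel_ratio :: "complex \<Rightarrow> complex \<Rightarrow> complex \<Rightarrow> complex" where
  "parallel_ratio w t1 t2 = (t1 + t2 + (w - 1) * t1 * t2) / (1 + w * t1 * t2)"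

lemma parallel_ratio_commute: "parallel_ratio w t1 t2 = parallel_ratio w t2 t1"
  unfolding parallel_ratio_def by (simp add: algebra_simps)

lemma parallel_ratio_absorbing:
  assumes "w \<noteq> 0" and "t \<noteq> 1"
  shows "parallel_ratio w (-1 / w) t = -1 / w"
proof -
  have "1 + w * (-1 / w) * t = 1 - t" and "-1 / w + t + (w - 1) * (-1 / w) * t = (-1 / w) * (1 - t)"
    using assms(1) by (simp_all add: field_simps)
  then show ?thesis unfolding parallel_ratio_def using assms(2) by simp
qed

lemma parallel_ratio_bound:
  fixes w t1 t2 :: complex and \<rho> M1 M2 :: real
  assumes r0: "0 < \<rho>" and r1: "\<rho> < 1" and w: "cmod w = 1 / \<rho>"
    and t1: "cmod t1 \<le> \<rho>" and t2: "cmod t2 \<le> \<rho>"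
    and b1: "\<rho> + cmod t1 \<le> \<rho> * (1 + cmod t1) * M1" and b2: "\<rho> + cmod t2 \<le> \<rho> * (1 + cmod t2) * M2"
    and m1: "M1 \<ge> 0" and m2: "M2 \<ge> 0" and rm: "\<rho> * (M1 * M2) < 1"
  shows "\<rho> + cmod (parallel_ratio w t1 t2) \<le> \<rho> * (1 + cmod (parallel_ratio w t1 t2)) * (M1 * M2)"
proof -
  define a where "a = cmod t1"
  define b where "b = cmod t2"
  have a0: "a \<ge> 0" and b0: "b \<ge> 0" unfolding a_def b_def by auto
  have aR: "a \<le> \<rho>" and bR: "b \<le> \<rho>" using t1 t2 unfolding a_def b_def by auto
  define p where "p = a * b"
  have p0: "p \<ge> 0" unfolding p_def using a0 b0 by simp
  have pR: "p \<le> \<rho> * \<rho>" unfolding p_def using aR bR a0 b0 by (intro mult_mono) auto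
  have pr: "p / \<rho> \<le> \<rho>" using pR r0 by (simp add: field_simps)
  have nz: "cmod (w * t1 * t2) = p / \<rho>" unfolding p_def a_def b_def using w by (simp add: norm_mult)
  define D0 where "D0 = 1 - p / \<rho>"
  have D0p: "D0 > 0" unfolding D0_def using pr r1 by simp
  have Dge: "cmod (1 + w * t1 * t2) \<ge> D0"
  proof -
    have "1 = cmod ((1 + w * t1 * t2) - w * t1 * t2)" by simp
    also have "\<dots> \<le> cmod (1 + w * t1 * t2) + cmod (w * t1 * t2)" by (rule norm_triangle_ineq4)
    finally show ?thesis unfolding D0_def using nz by simp
  qed
  define num where "num = a + b + (1 / \<rho> + 1) * p"
  have Nle: "cmod (t1 + t2 + (w - 1) * t1 * t2) \<le> num"
  proof -
    have i1: "cmod (t1 + t2 + (w - 1) * t1 * t2) \<le> cmod (t1 + t2) + cmod ((w - 1) * t1 * t2)"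
      by (rule norm_triangle_ineq)
    have i2: "cmod (t1 + t2) \<le> cmod t1 + cmod t2" by (rule norm_triangle_ineq)
    have i3: "cmod ((w - 1) * t1 * t2) = cmod (w - 1) * p" unfolding p_def a_def b_def by (simp add: norm_mult)
    have i4: "cmod (w - 1) \<le> 1 / \<rho> + 1" using norm_triangle_ineq4[of w 1] w by simp
    have i5: "cmod (w - 1) * p \<le> (1 / \<rho> + 1) * p" using i4 p0 by (rule mult_right_mono)
    show ?thesis unfolding num_def using i1 i2 i3 i5 unfolding a_def b_def by linarith
  qed
  define B where "B = num / D0"
  define \<tau> where "\<tau> = cmod (parallel_ratio w t1 t2)"
  have tB: "\<tau> \<le> B"
  proof -
    have "\<tau> = cmod (t1 + t2 + (w - 1) * t1 * t2) / cmod (1 + w * t1 * t2)"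
      unfolding \<tau>_def parallel_ratio_def by (simp add: norm_divide)
    also have "\<dots> \<le> num / D0"
      by (rule frac_le) (use Nle Dge D0p norm_ge_zero[of "t1 + t2 + (w - 1) * t1 * t2"] in linarith)+
    finally show ?thesis unfolding B_def .
  qed
  have BD: "B * D0 = num" unfolding B_def using D0p by simp
  have id1: "(\<rho> + B) * D0 = (\<rho> + a) * (\<rho> + b) / \<rho>"
  proof -
    have "(\<rho> + B) * D0 = \<rho> * D0 + num" using BD by (simp add: algebra_simps)
    also have "\<dots> = (\<rho> + a) * (\<rho> + b) / \<rho>" unfolding D0_def num_def p_def using r0 by (simp add: field_simps)
    finally show ?thesis .
  qed
  have id2: "\<rho> * (1 + B) * D0 = \<rho> * (1 + a) * (1 + b)"
  proof -
    have "\<rho> * (1 + B) * D0 = \<rho> * (D0 + num)" using BD by (simp add: algebra_simps)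
    also have "\<dots> = \<rho> * (1 + a) * (1 + b)" unfolding D0_def num_def p_def using r0 by (simp add: field_simps)
    finally show ?thesis .
  qed
  have prod: "(\<rho> + a) * (\<rho> + b) \<le> (\<rho> * (1 + a) * M1) * (\<rho> * (1 + b) * M2)"
  proof -
    have n1: "0 \<le> \<rho> * (1 + cmod t1) * M1" using r0 m1 by simp
    show ?thesis using b1 b2 a0 b0 r0 n1 unfolding a_def b_def by (intro mult_mono) auto
  qed
  have "(\<rho> + B) * D0 \<le> \<rho> * (1 + B) * (M1 * M2) * D0"
  proof -
    have "(\<rho> + a) * (\<rho> + b) / \<rho> \<le> (\<rho> * (1 + a) * M1) * (\<rho> * (1 + b) * M2) / \<rho>"
      by (rule divide_right_mono[OF prod]) (use r0 in simp)
    also have "\<dots> = \<rho> * (1 + a) * (1 + b) * (M1 * M2)" using r0 by (simp add: field_simps)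
    finally have c: "(\<rho> + a) * (\<rho> + b) / \<rho> \<le> \<rho> * (1 + a) * (1 + b) * (M1 * M2)" .
    have "\<rho> * (1 + B) * (M1 * M2) * D0 = (\<rho> * (1 + B) * D0) * (M1 * M2)" by (simp only: mult_ac)
    also have "\<dots> = \<rho> * (1 + a) * (1 + b) * (M1 * M2)" by (simp only: id2)
    finally have e2: "\<rho> * (1 + B) * (M1 * M2) * D0 = \<rho> * (1 + a) * (1 + b) * (M1 * M2)" .
    show ?thesis unfolding id1 e2 by (rule c)
  qed
  then have key: "\<rho> + B \<le> \<rho> * (1 + B) * (M1 * M2)" using D0p by simp
  have "\<rho> + \<tau> - \<rho> * (1 + \<tau>) * (M1 * M2) = \<rho> * (1 - M1 * M2) + \<tau> * (1 - \<rho> * (M1 * M2))" by (simp add: algebra_simps)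
  also have "\<dots> \<le> \<rho> * (1 - M1 * M2) + B * (1 - \<rho> * (M1 * M2))" using tB rm by (simp add: mult_right_mono)
  also have "\<dots> = \<rho> + B - \<rho> * (1 + B) * (M1 * M2)" by (simp add: algebra_simps)
  finally show ?thesis using key unfolding \<tau>_def by simp
qed

lemma series_ratio_bound:
  fixes t1 t2 :: complex and \<rho> X :: real
  assumes r0: "0 < \<rho>" and rx: "\<rho> * X < 1" and xb: "(1 + \<rho>) / (1 + \<rho>^2) \<le> X"
    and t1: "cmod t1 \<le> \<rho>" and t2: "cmod t2 \<le> \<rho>"
  shows "\<rho> + cmod (t1 * t2) \<le> \<rho> * (1 + cmod (t1 * t2)) * X"
proof -
  define \<tau> where "\<tau> = cmod (t1 * t2)"
  have tr: "\<tau> \<le> \<rho> * \<rho>" unfolding \<tau>_def norm_mult using t1 t2 r0 by (intro mult_mono) auto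
  have q2: "1 + \<rho>^2 > 0" by (simp add: add_pos_nonneg)
  have xx: "1 + \<rho> \<le> X * (1 + \<rho>^2)" using xb q2 by (simp add: field_simps)
  have "0 \<le> \<rho> * (X * (1 + \<rho>^2) - (1 + \<rho>))" using xx r0 by simp
  also have "\<dots> = (\<rho> * X - \<rho>) + (\<rho> * \<rho>) * (\<rho> * X - 1)" by (simp add: algebra_simps power2_eq_square)
  also have "\<dots> \<le> (\<rho> * X - \<rho>) + \<tau> * (\<rho> * X - 1)"
    using mult_right_mono_neg[OF tr, of "\<rho> * X - 1"] rx by simp
  also have "\<dots> = \<rho> * (1 + \<tau>) * X - (\<rho> + \<tau>)" by (simp add: algebra_simps)
  finally have "0 \<le> \<rho> * (1 + \<tau>) * X - (\<rho> + \<tau>)" .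
  then show ?thesis unfolding \<tau>_def by simp
qed

lemma norm_le_rho_of_ratio_bound:
  fixes \<rho> \<tau> M :: real
  assumes r0: "0 < \<rho>" and r1: "\<rho> < 1" and b: "\<rho> + \<tau> \<le> \<rho> * (1 + \<tau>) * M" and M: "M \<le> 2 / (1 + \<rho>)" and t0: "\<tau> \<ge> 0"
  shows "\<tau> \<le> \<rho>"
proof -
  have "\<rho> * (1 + \<tau>) * M \<le> \<rho> * (1 + \<tau>) * (2 / (1 + \<rho>))" using M r0 t0 by (intro mult_left_mono) auto
  then have c: "\<rho> + \<tau> \<le> \<rho> * (1 + \<tau>) * (2 / (1 + \<rho>))" using b by linarith
  have "(\<rho> + \<tau>) * (1 + \<rho>) \<le> \<rho> * (1 + \<tau>) * (2 / (1 + \<rho>)) * (1 + \<rho>)"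
    by (rule mult_right_mono[OF c]) (use r0 in simp)
  also have "\<rho> * (1 + \<tau>) * (2 / (1 + \<rho>)) * (1 + \<rho>) = 2 * \<rho> * (1 + \<tau>)" using r0 by (simp add: field_simps)
  finally have "(\<rho> + \<tau>) * (1 + \<rho>) \<le> 2 * \<rho> * (1 + \<tau>)" .
  then have "\<tau> * (1 - \<rho>) \<le> \<rho> * (1 - \<rho>)" by (simp add: algebra_simps)
  then show ?thesis using r1 by simp
qed

lemma wheatstone_ratio_bound:
  fixes q :: complex and \<rho> X :: real
  assumes q1: "q \<noteq> 1" and q2: "q \<noteq> 2" and r: "\<rho> = 1 / cmod (q - 1)" and X1: "X > 1"
    and h: "cmod (q - 2) \<ge> 2 * (1 - \<rho> * X^2) / (X^2 - 1)"
  shows "\<rho> + cmod (2 / ((q - 1) * (q - 2))) \<le> \<rho> * (1 + cmod (2 / ((q - 1) * (q - 2)))) * X^2"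
proof -
  have a: "q - 1 \<noteq> 0" "q - 2 \<noteq> 0" using q1 q2 by auto
  define d where "d = cmod (q - 2)"
  have d0: "d > 0" using a unfolding d_def by simp
  have c1: "cmod (q - 1) > 0" using a by simp
  have tw: "cmod (2 / ((q - 1) * (q - 2))) = 2 * \<rho> / d" unfolding d_def r by (simp add: norm_divide norm_mult)
  have r0: "\<rho> > 0" unfolding r using c1 by simp
  have x2: "X^2 > 1" using X1 by (simp add: one_less_power)
  have "2 * (1 - \<rho> * X^2) \<le> d * (X^2 - 1)" using h x2 unfolding d_def by (simp add: field_simps)
  then have "d + 2 \<le> (d + 2 * \<rho>) * X^2" by (simp add: algebra_simps)
  then have "(d + 2) * (\<rho> / d) \<le> (d + 2 * \<rho>) * X^2 * (\<rho> / d)" using r0 d0 by (intro mult_right_mono) auto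
  then have "\<rho> + 2 * \<rho> / d \<le> \<rho> * (1 + 2 * \<rho> / d) * X^2" using d0 by (simp add: field_simps)
  then show ?thesis using tw by simp
qed


lemma one_plus_mult_nonzero:
  fixes w t1 t2 :: complex
  assumes r0: "0 < \<rho>" "\<rho> < 1" and w: "cmod w = 1 / \<rho>" and t1: "cmod t1 \<le> \<rho>" and t2: "cmod t2 \<le> \<rho>"
  shows "1 + w * t1 * t2 \<noteq> 0"
proof
  assume h: "1 + w * t1 * t2 = 0"
  have "cmod (w * t1 * t2) = 1" using h by (metis add_eq_0_iff norm_minus_cancel norm_one)
  moreover have "cmod (w * t1 * t2) \<le> (1 / \<rho>) * \<rho> * \<rho>"
    unfolding norm_mult w using t1 t2 r0 by (intro mult_mono) auto
  moreover have "(1 / \<rho>) * \<rho> * \<rho> < 1" using r0 by simp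
  ultimately show False by simp
qed

lemma ratio_parallel_algebra:
  fixes q P P1 P2 S S1 S2 :: complex
  assumes q: "q \<noteq> 0" and p1: "P1 \<noteq> 0" and p2: "P2 \<noteq> 0"
    and D: "1 + (q - 1) * (S1 / P1) * (S2 / P2) \<noteq> 0"
    and e1: "q^2 * P = P1 * P2 + (q - 1) * S1 * S2" and e2: "q^2 * (P - S) = (P1 - S1) * (P2 - S2)"
  shows "P \<noteq> 0" "S / P = parallel_ratio (q - 1) (S1 / P1) (S2 / P2)"
proof -
  have Dn: "P1 * P2 + (q - 1) * S1 * S2 \<noteq> 0"
  proof -
    have "P1 * P2 + (q - 1) * S1 * S2 = P1 * P2 * (1 + (q - 1) * (S1 / P1) * (S2 / P2))"
      using p1 p2 by (simp add: field_simps)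
    then show ?thesis using p1 p2 D by simp
  qed
  have P: "P = (P1 * P2 + (q - 1) * S1 * S2) / q^2" using e1 q by (simp add: eq_divide_eq mult.commute)
  then show Pn: "P \<noteq> 0" using q Dn by simp
  have "q^2 * S = q^2 * P - (P1 - S1) * (P2 - S2)" using e2 by (simp add: algebra_simps)
  then have S: "S = (P1 * P2 + (q - 1) * S1 * S2 - (P1 - S1) * (P2 - S2)) / q^2"
    using e1 q by (simp add: eq_divide_eq mult.commute)
  have "S / P = (P1 * P2 + (q - 1) * S1 * S2 - (P1 - S1) * (P2 - S2)) / (P1 * P2 + (q - 1) * S1 * S2)"
    unfolding S P using q by simp
  also have "\<dots> = (S1 * P2 + S2 * P1 + (q - 1 - 1) * S1 * S2) / (P1 * P2 + (q - 1) * S1 * S2)"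
    by (simp add: algebra_simps)
  also have "\<dots> = ((S1/P1) + (S2/P2) + (q - 1 - 1) * (S1/P1) * (S2/P2)) / (1 + (q - 1) * (S1/P1) * (S2/P2))"
  proof -
    have n: "(S1/P1) + (S2/P2) + (q - 1 - 1) * (S1/P1) * (S2/P2) = (S1 * P2 + S2 * P1 + (q - 1 - 1) * S1 * S2) / (P1 * P2)"
      using p1 p2 by (simp add: field_simps)
    have d: "1 + (q - 1) * (S1/P1) * (S2/P2) = (P1 * P2 + (q - 1) * S1 * S2) / (P1 * P2)"
      using p1 p2 by (simp add: field_simps)
    have z: "P1 * P2 \<noteq> 0" using p1 p2 by simp
    show ?thesis unfolding n d using z by simp
  qed
  finally show "S / P = parallel_ratio (q - 1) (S1 / P1) (S2 / P2)" unfolding parallel_ratio_def .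
qed

lemma ratio_series_algebra:
  fixes q P P1 P2 S S1 S2 :: complex
  assumes q: "q \<noteq> 0" and p1: "P1 \<noteq> 0" and p2: "P2 \<noteq> 0"
    and e1: "q * P = P1 * P2" and e2: "q * S = S1 * S2"
  shows "P \<noteq> 0" "S / P = (S1 / P1) * (S2 / P2)"
proof -
  have P: "P = P1 * P2 / q" using e1 q by (simp add: field_simps)
  have S: "S = S1 * S2 / q" using e2 q by (simp add: field_simps)
  show "P \<noteq> 0" using P q p1 p2 by simp
  show "S / P = (S1 / P1) * (S2 / P2)" unfolding P S using q p1 p2 by simp
qed

definition external_path :: "'a set \<Rightarrow> ('a,'b) edge set \<Rightarrow> 'a set \<Rightarrow> ('a,'b) edge set \<Rightarrow> 'a \<Rightarrow> 'a \<Rightarrow> bool" where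
  "external_path V0 E0 V E s t \<longleftrightarrow>
    (\<exists>vs es. is_path V0 E0 s t vs es \<and> set es \<inter> E = {} \<and> set vs \<inter> V \<subseteq> {s,t})"

lemma external_path_sym:
  assumes "external_path V0 E0 V E s t"
  shows "external_path V0 E0 V E t s"
proof -
  obtain vs es where p: "is_path V0 E0 s t vs es" "set es \<inter> E = {}" "set vs \<inter> V \<subseteq> {s,t}"
    using assms unfolding external_path_def by blast
  have "is_path V0 E0 t s (rev vs) (rev es)" using p(1) by (rule path_rev)
  then show ?thesis unfolding external_path_def using p(2,3) by (intro exI[of _ "rev vs"] exI[of _ "rev es"]) auto
qed

lemma external_path_parallel:
  assumes "is_path V2 E2 s t vs es" and "V1 \<inter> V2 = {s,t}" and "E1 \<inter> E2 = {}"
    and "V2 \<subseteq> V0" and "E2 \<subseteq> E0"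
  shows "external_path V0 E0 V1 E1 s t"
  unfolding external_path_def
proof (intro exI conjI)
  show "is_path V0 E0 s t vs es" using assms(1,4,5) by (rule is_path_mono)
  show "set es \<inter> E1 = {}" using is_path_edges[OF assms(1)] assms(3) by auto
  show "set vs \<inter> V1 \<subseteq> {s,t}" using is_path_verts[OF assms(1)] assms(2) by auto
qed

lemma external_path_series:
  assumes ext: "external_path V0 E0 (V1 \<union> V2) (E1 \<union> E2) s t" and p2: "is_path V2 E2 m t vs2 es2"
    and I: "V1 \<inter> V2 = {m}" and d: "E1 \<inter> E2 = {}" and st: "s \<in> V1" "s \<noteq> m" "t \<noteq> m"
    and sub: "V2 \<subseteq> V0" "E2 \<subseteq> E0"
  shows "external_path V0 E0 V1 E1 s m"
proof -
  obtain vs es where p: "is_path V0 E0 s t vs es" "set es \<inter> (E1 \<union> E2) = {}" "set vs \<inter> (V1 \<union> V2) \<subseteq> {s,t}"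
    using ext unfolding external_path_def by blast
  have v2: "set vs2 \<subseteq> V2" using p2 by (rule is_path_verts)
  have "s \<notin> V2" "t \<notin> V1" using I st is_path_ends[OF p2] v2 by auto
  have p2_rev: "is_path V0 E0 t m (rev vs2) (rev es2)" using path_rev[OF p2] sub by (rule is_path_mono)
  have "set vs \<inter> set (rev vs2) = {t}"
    using p(3) v2 \<open>s \<notin> V2\<close> is_path_ends[OF p(1)] is_path_ends[OF p2] by auto
  then have "is_path V0 E0 s m (vs @ tl (rev vs2)) (es @ rev es2)" by (rule path_concat[OF p(1) p2_rev])
  moreover have "set (es @ rev es2) \<inter> E1 = {}" using p(2) is_path_edges[OF p2] d by auto
  moreover have "set (vs @ tl (rev vs2)) \<inter> V1 \<subseteq> {s,m}"
    using p(3) v2 \<open>t \<notin> V1\<close> I list.set_sel(2)[of "rev vs2"] by (cases "rev vs2") auto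
  ultimately show ?thesis unfolding external_path_def by blast
qed

lemma edge_disjoint_paths_Un:
  assumes "edge_disjoint_paths V1 E1 s t P1" "edge_disjoint_paths V2 E2 s t P2" "E1 \<inter> E2 = {}"
  shows "edge_disjoint_paths (V1 \<union> V2) (E1 \<union> E2) s t (P1 @ P2)"
proof (rule edge_disjoint_paths_append)
  show "edge_disjoint_paths (V1 \<union> V2) (E1 \<union> E2) s t P1" "edge_disjoint_paths (V1 \<union> V2) (E1 \<union> E2) s t P2"
    using assms(1,2) by (auto intro: edge_disjoint_paths_mono)
  fix p p' assume "p \<in> set P1" "p' \<in> set P2"
  then show "set (snd p) \<inter> set (snd p') = {}"
    using edge_disjoint_paths_edges[OF assms(1)] edge_disjoint_paths_edges[OF assms(2)] assms(3) by blast
qed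

lemma length_edge_disjoint_paths_external:
  assumes fin: "finite V0" "finite E0" and st: "s \<in> V0" "t \<in> V0" "s \<noteq> t"
    and P: "edge_disjoint_paths V E s t P" and sub: "V \<subseteq> V0" "E \<subseteq> E0"
    and ext: "external_path V0 E0 V E s t"
  shows "length P < maxmaxflow V0 E0"
proof -
  obtain vs es where p: "is_path V0 E0 s t vs es" "set es \<inter> E = {}"
    using ext unfolding external_path_def by blast
  have "edge_disjoint_paths V0 E0 s t (P @ [(vs,es)])"
  proof (rule edge_disjoint_paths_append)
    show "edge_disjoint_paths V0 E0 s t P" using P sub by (rule edge_disjoint_paths_mono)
    show "edge_disjoint_paths V0 E0 s t [(vs,es)]" using p(1) by (rule edge_disjoint_paths_single)
    fix p' p'' assume "p' \<in> set P" "p'' \<in> set [(vs,es)]"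
    moreover have "set (snd p') \<subseteq> E" using P \<open>p' \<in> set P\<close> by (rule edge_disjoint_paths_edges)
    ultimately show "set (snd p') \<inter> set (snd p'') = {}" using p(2) by auto
  qed
  from length_le_maxmaxflow[OF fin st this] show ?thesis by simp
qed

definition conn_ratio :: "'a set \<Rightarrow> ('a,'b) edge set \<Rightarrow> 'a \<Rightarrow> 'a \<Rightarrow> complex \<Rightarrow> complex" where
  "conn_ratio V E s t q = chrom_conn V E s t q / chrom_poly V E q"

lemma conn_ratio_series:
  assumes W: "inW V1 E1 s m" "inW V2 E2 m t" and I: "V1 \<inter> V2 = {m}" and d: "E1 \<inter> E2 = {}"
    and q: "q \<noteq> 0" and P: "chrom_poly V1 E1 q \<noteq> 0" "chrom_poly V2 E2 q \<noteq> 0"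
  shows "chrom_poly (V1 \<union> V2) (E1 \<union> E2) q \<noteq> 0"
    and "conn_ratio (V1 \<union> V2) (E1 \<union> E2) s t q = conn_ratio V1 E1 s m q * conn_ratio V2 E2 m t q"
  using ratio_series_algebra[OF q P chrom_poly_series[OF _ _ _ _ _ _ I d]] inW_basic[OF W(1)] inW_basic[OF W(2)]
  unfolding conn_ratio_def by auto

lemma conn_ratio_parallel:
  assumes W: "inW V1 E1 s t" "inW V2 E2 s t" and I: "V1 \<inter> V2 = {s,t}" and d: "E1 \<inter> E2 = {}"
    and q: "q \<noteq> 0" and P: "chrom_poly V1 E1 q \<noteq> 0" "chrom_poly V2 E2 q \<noteq> 0"
    and D: "1 + (q - 1) * conn_ratio V1 E1 s t q * conn_ratio V2 E2 s t q \<noteq> 0"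
  shows "chrom_poly (V1 \<union> V2) (E1 \<union> E2) q \<noteq> 0"
    and "conn_ratio (V1 \<union> V2) (E1 \<union> E2) s t q =
      parallel_ratio (q - 1) (conn_ratio V1 E1 s t q) (conn_ratio V2 E2 s t q)"
  using ratio_parallel_algebra[OF q P D[unfolded conn_ratio_def] chrom_poly_parallel[OF _ _ _ _ _ _ I d]]
    inW_basic[OF W(1)] inW_basic[OF W(2)]
  unfolding conn_ratio_def by auto

locale zero_free_region =
  fixes L :: nat and q :: complex and \<rho> X :: real
  assumes L3: "L \<ge> 3" and q_ne_1: "q \<noteq> 1" and rho_def: "\<rho> = 1 / cmod (q - 1)"
    and rho_le: "\<rho> \<le> rho_star L" and X_def: "X = (2 / (1 + \<rho>)) powr (1 / (real L - 1))"
    and q_far_from_2: "cmod (q - 2) \<ge> 2 * (1 - \<rho> * X^2) / (X^2 - 1)"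
begin

lemma rho_pos: "0 < \<rho>"
  using q_ne_1 unfolding rho_def by simp

lemmas X_bounds = X_bounds[OF L3 rho_pos rho_le X_def]

lemma norm_q_minus_1: "cmod (q - 1) = 1 / \<rho>"
  using rho_def rho_pos by simp

lemma q_ne_0: "q \<noteq> 0" and q_ne_2: "q \<noteq> 2"
  using norm_q_minus_1 rho_pos X_bounds(1) by (auto simp: field_simps)

lemma X_power_le:
  assumes "k \<le> L - 1"
  shows "X ^ k \<le> 2 / (1 + \<rho>)"
proof -
  have "X ^ k \<le> X ^ (L - 1)" using assms X_bounds(2) by (intro power_increasing) auto
  then show ?thesis using X_bounds(3) by simp
qed

definition good_ratio :: "'a set \<Rightarrow> ('a,'b) edge set \<Rightarrow> 'a \<Rightarrow> 'a \<Rightarrow> complex \<Rightarrow> bool" where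
  "good_ratio V E s t T \<longleftrightarrow> T = -1 / (q - 1) \<or>
     (\<exists>P. edge_disjoint_paths V E s t P \<and> length P \<le> L - 1 \<and>
        \<rho> + cmod T \<le> \<rho> * (1 + cmod T) * X ^ length P)"

lemma norm_neg_inverse_q_minus_1: "cmod (-1 / (q - 1)) = \<rho>"
  using rho_def by (simp add: norm_divide)

lemma good_ratio_norm_le: "good_ratio V E s t T \<Longrightarrow> cmod T \<le> \<rho>"
  unfolding good_ratio_def
  using norm_neg_inverse_q_minus_1 norm_le_rho_of_ratio_bound[OF rho_pos X_bounds(1) _ X_power_le]
  by auto

lemma good_ratio_series:
  assumes "good_ratio V1 E1 s m t1" "good_ratio V2 E2 m t t2" and "is_path V E s t vs es"
  shows "good_ratio V E s t (t1 * t2)"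
proof -
  have "\<rho> + cmod (t1 * t2) \<le> \<rho> * (1 + cmod (t1 * t2)) * X ^ length [(vs,es)]"
    using series_ratio_bound[OF rho_pos X_bounds(5) X_bounds(4)]
      good_ratio_norm_le[OF assms(1)] good_ratio_norm_le[OF assms(2)] by simp
  moreover have "edge_disjoint_paths V E s t [(vs,es)]" using assms(3) by (rule edge_disjoint_paths_single)
  ultimately show ?thesis unfolding good_ratio_def using L3 by fastforce
qed

lemma good_ratio_parallel:
  assumes g: "good_ratio V1 E1 s t t1" "good_ratio V2 E2 s t t2"
    and fam: "\<And>P1 P2. edge_disjoint_paths V1 E1 s t P1 \<Longrightarrow> edge_disjoint_paths V2 E2 s t P2 \<Longrightarrow>
      edge_disjoint_paths V E s t (P1 @ P2) \<and> length P1 + length P2 \<le> L - 1"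
  shows "good_ratio V E s t (parallel_ratio (q - 1) t1 t2)"
proof -
  have t: "cmod t1 \<le> \<rho>" "cmod t2 \<le> \<rho>" using g by (auto intro: good_ratio_norm_le)
  have "q - 1 \<noteq> 0" using q_ne_1 by simp
  consider "t1 = -1 / (q - 1)" | "t2 = -1 / (q - 1)"
    | P1 P2 where "edge_disjoint_paths V1 E1 s t P1" "\<rho> + cmod t1 \<le> \<rho> * (1 + cmod t1) * X ^ length P1"
        "edge_disjoint_paths V2 E2 s t P2" "\<rho> + cmod t2 \<le> \<rho> * (1 + cmod t2) * X ^ length P2"
    using g unfolding good_ratio_def by blast
  then show ?thesis
  proof cases
    case 1
    have "t2 \<noteq> 1" using t(2) X_bounds(1) by auto
    then show ?thesis using 1 parallel_ratio_absorbing[OF \<open>q - 1 \<noteq> 0\<close>] unfolding good_ratio_def by simp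
  next
    case 2
    have "t1 \<noteq> 1" using t(1) X_bounds(1) by auto
    then show ?thesis using 2 parallel_ratio_absorbing[OF \<open>q - 1 \<noteq> 0\<close>] parallel_ratio_commute
      unfolding good_ratio_def by metis
  next
    case (3 P1 P2)
    from fam[OF 3(1,3)] have P: "edge_disjoint_paths V E s t (P1 @ P2)" "length (P1 @ P2) \<le> L - 1" by auto
    have "\<rho> * (X ^ length P1 * X ^ length P2) \<le> \<rho> * (2 / (1 + \<rho>))"
      using X_power_le[OF P(2)] rho_pos by (intro mult_left_mono) (simp_all add: power_add)
    also have "\<dots> < 1" using rho_pos X_bounds(1) by (simp add: field_simps)
    finally have "\<rho> + cmod (parallel_ratio (q - 1) t1 t2) \<le>
        \<rho> * (1 + cmod (parallel_ratio (q - 1) t1 t2)) * (X ^ length P1 * X ^ length P2)"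
      using X_bounds(2) by (intro parallel_ratio_bound[OF rho_pos X_bounds(1) norm_q_minus_1 t 3(2,4)]) auto
    then show ?thesis unfolding good_ratio_def using P by (auto simp: power_add)
  qed
qed

lemma good_ratio_wheatstone:
  fixes l1 l2 l3 l4 l5 :: 'b
  assumes "distinct [s,a,b,t]"
  defines "E \<equiv> {(l1,{s,a}), (l2,{s,b}), (l3,{a,b}), (l4,{a,t}), (l5,{b,t})}"
  shows "good_ratio {s,a,b,t} E s t (2 / ((q - 1) * (q - 2)))"
proof -
  let ?P = "[([s,a,t], [(l1,{s,a}),(l4,{a,t})]), ([s,b,t], [(l2,{s,b}),(l5,{b,t})])]"
  have "edge_disjoint_paths {s,a,b,t} E s t ?P"
    using assms(1) unfolding edge_disjoint_paths_def is_path_def E_def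
    by (auto simp: less_Suc_eq nth_Cons' doubleton_eq_iff)
  moreover have "length ?P \<le> L - 1" using L3 by simp
  moreover have "\<rho> + cmod (2 / ((q - 1) * (q - 2))) \<le> \<rho> * (1 + cmod (2 / ((q - 1) * (q - 2)))) * X ^ length ?P"
    using wheatstone_ratio_bound[OF q_ne_1 q_ne_2 rho_def X_bounds(2) q_far_from_2] by (simp add: power2_eq_square)
  ultimately show ?thesis unfolding good_ratio_def by blast
qed

lemma chrom_poly_nonzero_and_good_ratio:
  assumes fin: "finite V0" "finite E0" and mmf: "maxmaxflow V0 E0 \<le> L"
  shows "inW V E s t \<Longrightarrow> V \<subseteq> V0 \<Longrightarrow> E \<subseteq> E0 \<Longrightarrow> chrom_poly V E q \<noteq> 0 \<and>
    (external_path V0 E0 V E s t \<longrightarrow> good_ratio V E s t (conn_ratio V E s t q))"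
proof (induction rule: inW.induct)
  case (K2 s t l)
  note K2_values = K2_chrom_poly[OF K2(1), of l q]
  have "q * (q - 1) \<noteq> 0" using q_ne_0 q_ne_1 by simp
  moreover have "conn_ratio {s,t} {(l,{s,t})} s t q = -1 / (q - 1)"
    unfolding conn_ratio_def K2_values using q_ne_0 by simp
  ultimately show ?case unfolding good_ratio_def K2_values by simp
next
  case (Wheatstone s a b t l1 l2 l3 l4 l5)
  let ?V = "{s,a,b,t}" and ?E = "{(l1,{s,a}), (l2,{s,b}), (l3,{a,b}), (l4,{a,t}), (l5,{b,t})}"
  note W_values = wheatstone_chrom_poly[OF Wheatstone(1), of l1 l2 l3 l4 l5 q]
  have nz: "q * (q - 2) \<noteq> 0" "q - 1 \<noteq> 0" using q_ne_0 q_ne_1 q_ne_2 by auto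
  have "conn_ratio ?V ?E s t q = (q * (q - 2)) * 2 / ((q * (q - 2)) * ((q - 1) * (q - 2)))"
    unfolding conn_ratio_def W_values by (simp add: power2_eq_square mult_ac)
  also have "\<dots> = 2 / ((q - 1) * (q - 2))" using nz(1) by (rule mult_divide_mult_cancel_left)
  finally have "conn_ratio ?V ?E s t q = 2 / ((q - 1) * (q - 2))" .
  moreover have "chrom_poly ?V ?E q \<noteq> 0" unfolding W_values using nz by simp
  ultimately show ?case using good_ratio_wheatstone[OF Wheatstone(1), of l1 l2 l3 l4 l5] by simp
next
  case (parallel V1 E1 s t V2 E2)
  have sub: "V1 \<subseteq> V0" "E1 \<subseteq> E0" "V2 \<subseteq> V0" "E2 \<subseteq> E0" using parallel.prems by auto
  obtain vs1 es1 vs2 es2 where "is_path V1 E1 s t vs1 es1" "is_path V2 E2 s t vs2 es2"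
    using inW_path[OF parallel.hyps(1)] inW_path[OF parallel.hyps(2)] by blast
  then have "external_path V0 E0 V1 E1 s t" "external_path V0 E0 V2 E2 s t"
    using parallel.hyps(3,4) sub by (auto intro: external_path_parallel simp: Int_commute)
  then have IH: "chrom_poly V1 E1 q \<noteq> 0" "chrom_poly V2 E2 q \<noteq> 0"
      "good_ratio V1 E1 s t (conn_ratio V1 E1 s t q)" "good_ratio V2 E2 s t (conn_ratio V2 E2 s t q)"
    using parallel.IH sub by auto
  have "1 + (q - 1) * conn_ratio V1 E1 s t q * conn_ratio V2 E2 s t q \<noteq> 0"
    using good_ratio_norm_le[OF IH(3)] good_ratio_norm_le[OF IH(4)]
    by (intro one_plus_mult_nonzero[OF rho_pos X_bounds(1) norm_q_minus_1])
  note ratio = conn_ratio_parallel[OF parallel.hyps(1-4) q_ne_0 IH(1,2) this]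
  have st: "s \<in> V0" "t \<in> V0" "s \<noteq> t" using inW_basic[OF parallel.hyps(1)] sub by auto
  have "edge_disjoint_paths (V1 \<union> V2) (E1 \<union> E2) s t (P1 @ P2) \<and> length P1 + length P2 \<le> L - 1"
    if "edge_disjoint_paths V1 E1 s t P1" "edge_disjoint_paths V2 E2 s t P2"
      and "external_path V0 E0 (V1 \<union> V2) (E1 \<union> E2) s t" for P1 P2
    using edge_disjoint_paths_Un[OF that(1,2) parallel.hyps(4)] mmf parallel.prems
      length_edge_disjoint_paths_external[OF fin st _ _ _ that(3)] by fastforce
  then show ?case using ratio good_ratio_parallel[OF IH(3,4)] by auto
next
  case (series V1 E1 s m V2 E2 t)
  have sub: "V1 \<subseteq> V0" "E1 \<subseteq> E0" "V2 \<subseteq> V0" "E2 \<subseteq> E0" using series.prems by auto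
  note IH1 = series.IH(1)[OF sub(1,2)] and IH2 = series.IH(2)[OF sub(3,4)]
  note ratio = conn_ratio_series[OF series.hyps(1-4) q_ne_0 conjunct1[OF IH1] conjunct1[OF IH2]]
  obtain vs1 es1 vs2 es2 where p: "is_path V1 E1 s m vs1 es1" "is_path V2 E2 m t vs2 es2"
    using inW_path[OF series.hyps(1)] inW_path[OF series.hyps(2)] by blast
  have st: "s \<in> V1" "s \<noteq> m" "t \<in> V2" "t \<noteq> m"
    using inW_basic[OF series.hyps(1)] inW_basic[OF series.hyps(2)] by auto
  have "good_ratio (V1 \<union> V2) (E1 \<union> E2) s t (conn_ratio V1 E1 s m q * conn_ratio V2 E2 m t q)"
    if ext: "external_path V0 E0 (V1 \<union> V2) (E1 \<union> E2) s t"
  proof (rule good_ratio_series)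
    have "external_path V0 E0 V1 E1 s m"
      by (rule external_path_series[OF ext p(2) series.hyps(3,4) st(1,2,4) sub(3,4)])
    then show "good_ratio V1 E1 s m (conn_ratio V1 E1 s m q)" using IH1 by blast
    have ext': "external_path V0 E0 (V2 \<union> V1) (E2 \<union> E1) t s"
      using external_path_sym[OF ext] by (simp only: Un_commute)
    have I': "V2 \<inter> V1 = {m}" "E2 \<inter> E1 = {}" using series.hyps(3,4) by (simp_all only: Int_commute)
    have "external_path V0 E0 V2 E2 m t"
      by (rule external_path_sym, rule external_path_series[OF ext' path_rev[OF p(1)] I' st(3,4,2) sub(1,2)])
    then show "good_ratio V2 E2 m t (conn_ratio V2 E2 m t q)" using IH2 by blast
    show "is_path (V1 \<union> V2) (E1 \<union> E2) s t (vs1 @ tl vs2) (es1 @ es2)"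
      using p series.hyps(3) by (rule is_path_series)
  qed
  then show ?case using ratio by simp
qed

end

theorem theorem8p2:
  fixes L :: nat and V :: "'a set" and E :: "('a,'b) edge set" and s t :: 'a and q :: complex
  assumes "L \<ge> 3"
    and "inW V E s t"
    and "maxmaxflow V E \<le> L"
    and "q \<noteq> 1"
    and "cmod (q - 1) \<ge> 1 / rho_star L"
    and "cmod (q - 2) \<ge>
           (let \<rho> = 1 / cmod (q - 1); X = (2 / (1 + \<rho>)) powr (1 / (real L - 1))
            in 2 * (1 - \<rho> * X\<^sup>2) / (X\<^sup>2 - 1))"
  shows "chrom_poly V E q \<noteq> 0"
proof -
  define \<rho> where "\<rho> = 1 / cmod (q - 1)"
  define X where "X = (2 / (1 + \<rho>)) powr (1 / (real L - 1))"
  have "0 < rho_star L" using rho_star[OF assms(1)] by simp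
  then have "\<rho> \<le> rho_star L"
    using assms(4,5) unfolding \<rho>_def by (simp add: field_simps)
  then interpret zero_free_region L q \<rho> X
    using assms(1,4,6) by unfold_locales (simp_all add: \<rho>_def X_def Let_def)
  have "finite V" "finite E" using inW_basic[OF assms(2)] by auto
  from chrom_poly_nonzero_and_good_ratio[OF this assms(3) assms(2) order_refl order_refl]
  show ?thesis by blast
qed

end
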